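(* Let $F$ be a supertransversal fully-connected ReLU network. For cells $C,D$ of $\mathcal{C}(F)$ define the product $S(C)\cdot S(D)\in\{-1,0,1\}^N$ by $(S(C)\cdot S(D))_{ij}=S(C)_{ij}$ if $S(C)_{ij}\neq 0$ and $(S(C)\cdot S(D))_{ij}=S(D)_{ij}$ otherwise. Then for all cells $C,D$ of $\mathcal{C}(F)$ there exists a cell $E$ of $\mathcal{C}(F)$ with $S(C)\cdot S(D)=S(E)$, and moreover $C\le E$. Thus the set of sign sequences of cells of $\mathcal{C}(F)$ is a semigroup under this product.
   Context: A ReLU network of architecture $(n_0,\dots,n_m,1)$: affine maps $A_i:\mathbb{R}^{n_{i-1}}\to\mathbb{R}^{n_i}$, $1\le i\le m+1$, $n_{m+1}=1$; $F_i=\mathrm{ReLU}\circ A_i$ ($i\le m$), $G=A_{m+1}$, $F=G\circ F_m\circ\cdots\circ F_1$, $F_{(k)}=F_k\circ\cdots\circ F_1$ ($F_{(0)}=\mathrm{id}$), $F^{(k)}=G\circ F_m\circ\cdots\circ F_k:\mathbb{R}^{n_{k-1}}\to\mathbb{R}$ ($F^{(m+1)}=G$). Node maps $F_{ij}=\pi_j\circ A_i\circ F_{(i-1)}$, $1\le i\le m+1$, $1\le j\le n_i$; $N=n_1+\dots+n_m+1$. Polyhedra are finite intersections of closed half-spaces; $C^\circ$ is the relative interior; $C\le E$ means $C$ is a face of $E$ or equal to $E$. $R^{(i)}$ is the polyhedral complex on $\mathbb{R}^{n_{i-1}}$ induced by the hyperplanes $\{\pi_jA_i=0\}$, $1\le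 j\le n_i$ (cells: nonempty intersections of one choice among $\{\pi_jA_i\ge0\},\{\pi_jA_i\le0\},\{\pi_jA_i=0\}$ for each $j$). Canonical polyhedral complex: $\mathcal{C}(F_{(1)})=R^{(1)}$, $\mathcal{C}(F_{(k)})=\{C\cap F_{(k-1)}^{-1}(R)\neq\emptyset: C\in\mathcal{C}(F_{(k-1)}),R\in R^{(k)}\}$, $2\le k\le m+1$; $\mathcal{C}(F)$ is the last one. The same construction for $F^{(k)}$ gives $\mathcal{C}(F^{(k)})$ on $\mathbb{R}^{n_{k-1}}$, with $\mathcal{C}(F^{(m+1)})=R^{(m+1)}$. The sign sequence $S(C)=s(C)\in\{-1,0,1\}^N$ of a cell has entries $S(C)_{ij}=\mathrm{sgn}(F_{ij}(x))$ for $x\in C^\circ$. A map affine on cells of a polyhedral complex $X$ is transverse on cells of $X$ to a submanifold $Z$ if its restriction to $C^\circ$ is transverse to $Z$ for each cell $C$. Supertransversal: for every $1\le i\le m$, $F_i$ is transverse on cells of $R^{(i)}$ to the interior of every cell of $\mathcal{C}(F^{(i+1)})$. *)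

theory Defs
  imports "HOL-Analysis.Analysis"
begin

text \<open>Points of R^d are represented as functions nat => real vanishing at
  all coordinates k >= d (coordinates are indexed 0..d-1).  All vector
  operations are written out pointwise.\<close>

definition Rsp :: "nat \<Rightarrow> (nat \<Rightarrow> real) set" where
  "Rsp d = {x. \<forall>k\<ge>d. x k = 0}"

definition relu :: "real \<Rightarrow> real" where
  "relu t = max 0 t"

definition sgnz :: "real \<Rightarrow> int" where
  "sgnz t = (if t > 0 then 1 else if t < 0 then -1 else 0)"

definition affhull :: "(nat \<Rightarrow> real) set \<Rightarrow> (nat \<Rightarrow> real) set" where
  "affhull S = {y. \<exists>T u. finite T \<and> T \<noteq> {} \<and> T \<subseteq> S \<and> sum u T = 1 \<and>
                        y = (\<lambda>k. \<Sum>p\<in>T. u p * p k)}"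

text \<open>Relative interior (w.r.t. the sup-norm, which induces the Euclidean
  topology on every R^d).\<close>
definition relint :: "(nat \<Rightarrow> real) set \<Rightarrow> (nat \<Rightarrow> real) set" where
  "relint S = {x \<in> S. \<exists>e>0. \<forall>y\<in>affhull S. (\<forall>k. \<bar>y k - x k\<bar> < e) \<longrightarrow> y \<in> S}"

text \<open>Tangent space (= direction of the affine hull) of a relatively open
  subset of an affine subspace.\<close>
definition tspace :: "(nat \<Rightarrow> real) set \<Rightarrow> (nat \<Rightarrow> real) set" where
  "tspace S = {(\<lambda>k. y k - z k) | y z. y \<in> affhull S \<and> z \<in> affhull S}"

definition convexset :: "(nat \<Rightarrow> real) set \<Rightarrow> bool" where
  "convexset S \<longleftrightarrow> (\<forall>x\<in>S. \<forall>y\<in>S. \<forall>t::real. 0 \<le> t \<and> t \<le> 1 \<longrightarrow>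
                       (\<lambda>k. (1 - t) * x k + t * y k) \<in> S)"

definition faceof :: "(nat \<Rightarrow> real) set \<Rightarrow> (nat \<Rightarrow> real) set \<Rightarrow> bool" where
  "faceof T S \<longleftrightarrow> T \<subseteq> S \<and> convexset T \<and>
     (\<forall>a\<in>S. \<forall>b\<in>S. \<forall>x\<in>T. a \<noteq> b \<and> (\<exists>t::real. 0 < t \<and> t < 1 \<and> x = (\<lambda>k. (1 - t) * a k + t * b k))
        \<longrightarrow> a \<in> T \<and> b \<in> T)"

definition face_le :: "(nat \<Rightarrow> real) set \<Rightarrow> (nat \<Rightarrow> real) set \<Rightarrow> bool" where
  "face_le C E \<longleftrightarrow> C = E \<or> faceof C E"

definition dirderiv :: "((nat \<Rightarrow> real) \<Rightarrow> (nat \<Rightarrow> real)) \<Rightarrow> (nat \<Rightarrow> real) \<Rightarrow> (nat \<Rightarrow> real) \<Rightarrow> (nat \<Rightarrow> real) \<Rightarrow> bool" where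
  "dirderiv f x v u \<longleftrightarrow>
     (\<forall>j. ((\<lambda>t. (f (\<lambda>k. x k + t * v k) j - f x j) / t) \<longlongrightarrow> u j) (at 0))"

text \<open>f (affine on the cell C) restricted to the relative interior of C is
  transverse to the submanifold Z of R^d: at every x in relint C with f x in Z,
  df_x(T_x C) + T_{f x} Z = R^d.\<close>
definition transverse_on_cell ::
  "((nat \<Rightarrow> real) \<Rightarrow> (nat \<Rightarrow> real)) \<Rightarrow> (nat \<Rightarrow> real) set \<Rightarrow> nat \<Rightarrow> (nat \<Rightarrow> real) set \<Rightarrow> bool" where
  "transverse_on_cell f C d Z \<longleftrightarrow>
     (\<forall>x\<in>relint C. f x \<in> Z \<longrightarrow>
        (\<forall>w\<in>Rsp d. \<exists>v\<in>tspace (relint C). \<exists>u z. dirderiv f x v u \<and> z \<in> tspace Z \<and>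
                     w = (\<lambda>j. u j + z j)))"

text \<open>Architecture (n 0, ..., n m, n (m+1) = 1); layer i (1 <= i <= m+1) has
  weights W i j k (row j < n i, column k < n (i-1)) and bias b i j.\<close>

definition affmap :: "(nat \<Rightarrow> nat) \<Rightarrow> (nat \<Rightarrow> nat \<Rightarrow> nat \<Rightarrow> real) \<Rightarrow> (nat \<Rightarrow> nat \<Rightarrow> real) \<Rightarrow>
                      nat \<Rightarrow> (nat \<Rightarrow> real) \<Rightarrow> (nat \<Rightarrow> real)" where
  "affmap n W b i x = (\<lambda>j. if j < n i then (\<Sum>k<n (i - 1). W i j k * x k) + b i j else 0)"

definition layer :: "(nat \<Rightarrow> nat) \<Rightarrow> (nat \<Rightarrow> nat \<Rightarrow> nat \<Rightarrow> real) \<Rightarrow> (nat \<Rightarrow> nat \<Rightarrow> real) \<Rightarrow>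
                     nat \<Rightarrow> (nat \<Rightarrow> real) \<Rightarrow> (nat \<Rightarrow> real)" where
  "layer n W b i x = (\<lambda>j. relu (affmap n W b i x j))"

fun Fpre :: "(nat \<Rightarrow> nat) \<Rightarrow> (nat \<Rightarrow> nat \<Rightarrow> nat \<Rightarrow> real) \<Rightarrow> (nat \<Rightarrow> nat \<Rightarrow> real) \<Rightarrow>
             nat \<Rightarrow> (nat \<Rightarrow> real) \<Rightarrow> (nat \<Rightarrow> real)" where
  "Fpre n W b 0 x = x"
| "Fpre n W b (Suc k) x = layer n W b (Suc k) (Fpre n W b k x)"

text \<open>Flay k j = F_{k+j} o ... o F_k\<close>
fun Flay :: "(nat \<Rightarrow> nat) \<Rightarrow> (nat \<Rightarrow> nat \<Rightarrow> nat \<Rightarrow> real) \<Rightarrow> (nat \<Rightarrow> nat \<Rightarrow> real) \<Rightarrow>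
             nat \<Rightarrow> nat \<Rightarrow> (nat \<Rightarrow> real) \<Rightarrow> (nat \<Rightarrow> real)" where
  "Flay n W b k 0 x = layer n W b k x"
| "Flay n W b k (Suc j) x = layer n W b (k + Suc j) (Flay n W b k j x)"

text \<open>Node map F_ij = pi_j o A_i o F_(i-1)  (1 <= i <= m+1, 0 <= j < n i)\<close>
definition node :: "(nat \<Rightarrow> nat) \<Rightarrow> (nat \<Rightarrow> nat \<Rightarrow> nat \<Rightarrow> real) \<Rightarrow> (nat \<Rightarrow> nat \<Rightarrow> real) \<Rightarrow>
                    nat \<Rightarrow> nat \<Rightarrow> (nat \<Rightarrow> real) \<Rightarrow> real" where
  "node n W b i j x = affmap n W b i (Fpre n W b (i - 1) x) j"

definition signcond :: "int \<Rightarrow> real \<Rightarrow> bool" where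
  "signcond s t \<longleftrightarrow> (if s = 1 then t \<ge> 0 else if s = -1 then t \<le> 0 else t = 0)"

text \<open>Cells of R^(i), the complex on R^{n (i-1)} induced by the hyperplanes
  {pi_j A_i = 0}.\<close>
definition Rcells :: "(nat \<Rightarrow> nat) \<Rightarrow> (nat \<Rightarrow> nat \<Rightarrow> nat \<Rightarrow> real) \<Rightarrow> (nat \<Rightarrow> nat \<Rightarrow> real) \<Rightarrow>
                      nat \<Rightarrow> (nat \<Rightarrow> real) set set" where
  "Rcells n W b i =
     {R. R \<noteq> {} \<and> (\<exists>\<sigma>::nat \<Rightarrow> int. (\<forall>j<n i. \<sigma> j \<in> {-1, 0, 1}) \<and>
          R = {x \<in> Rsp (n (i - 1)). \<forall>j<n i. signcond (\<sigma> j) (affmap n W b i x j)})}"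

text \<open>cplx k j = canonical polyhedral complex (on R^{n (k-1)}) of the composite
  of layers k, ..., k+j (the last one taken with ReLU or not is irrelevant,
  only the hyperplanes of A_{k+j} enter).  Thus C(F_(k)) = cplx 1 (k-1),
  C(F) = cplx 1 m, C(F^(k)) = cplx k (m+1-k).\<close>
fun cplx :: "(nat \<Rightarrow> nat) \<Rightarrow> (nat \<Rightarrow> nat \<Rightarrow> nat \<Rightarrow> real) \<Rightarrow> (nat \<Rightarrow> nat \<Rightarrow> real) \<Rightarrow>
             nat \<Rightarrow> nat \<Rightarrow> (nat \<Rightarrow> real) set set" where
  "cplx n W b k 0 = Rcells n W b k"
| "cplx n W b k (Suc j) =
     {E. E \<noteq> {} \<and> (\<exists>C R. C \<in> cplx n W b k j \<and> R \<in> Rcells n W b (k + Suc j) \<and>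
                          E = C \<inter> {x. Flay n W b k j x \<in> R})}"

text \<open>Sign sequence S(C)_{ij} = sgn F_ij(x), x in relint C; index set
  1 <= i <= m+1, j < n i (entries outside are 0).\<close>
definition signseq :: "nat \<Rightarrow> (nat \<Rightarrow> nat) \<Rightarrow> (nat \<Rightarrow> nat \<Rightarrow> nat \<Rightarrow> real) \<Rightarrow> (nat \<Rightarrow> nat \<Rightarrow> real) \<Rightarrow>
                       (nat \<Rightarrow> real) set \<Rightarrow> nat \<Rightarrow> nat \<Rightarrow> int" where
  "signseq m n W b C = (\<lambda>i j. if 1 \<le> i \<and> i \<le> Suc m \<and> j < n i
        then sgnz (node n W b i j (SOME x. x \<in> relint C)) else 0)"

definition sprod :: "(nat \<Rightarrow> nat \<Rightarrow> int) \<Rightarrow> (nat \<Rightarrow> nat \<Rightarrow> int) \<Rightarrow> nat \<Rightarrow> nat \<Rightarrow> int" where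
  "sprod s t = (\<lambda>i j. if s i j \<noteq> 0 then s i j else t i j)"

definition supertransversal :: "nat \<Rightarrow> (nat \<Rightarrow> nat) \<Rightarrow> (nat \<Rightarrow> nat \<Rightarrow> nat \<Rightarrow> real) \<Rightarrow> (nat \<Rightarrow> nat \<Rightarrow> real) \<Rightarrow> bool" where
  "supertransversal m n W b \<longleftrightarrow>
     (\<forall>i. 1 \<le> i \<and> i \<le> m \<longrightarrow>
        (\<forall>C\<in>Rcells n W b i. \<forall>K\<in>cplx n W b (Suc i) (m - i).
            transverse_on_cell (layer n W b i) C (n i) (relint K)))"

end

theory Submission
  imports Defs
begin

text \<open>
  A cell of \<open>C(F)\<close> is the closed set on which every node has a prescribed sign, and it is
  determined by the sign vector of any point of its relative interior. On such a cell every node is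
  affine, which gives the face property directly: if a point of the cell of \<open>S(C)\<close> lies inside a
  segment contained in the cell of \<open>S(C) \<cdot> S(D)\<close>, then every node vanishing at that point has
  constant sign along the segment and therefore vanishes on all of it.

  The real content is that \<open>S(C) \<cdot> S(D)\<close> occurs as a sign vector at all. Given points \<open>p\<close> and
  \<open>q\<close>, a point \<open>r\<close> with \<open>S(r) = S(p) \<cdot> S(q)\<close> is built by downward induction on the first layer
  \<open>k\<close> taken into account. For the last layer \<open>r = p + s (q - p)\<close> with small \<open>s > 0\<close> works. For
  layer \<open>k\<close>, let \<open>a = F\<^sub>k p\<close> and choose by induction \<open>c\<close> realising \<open>S(a) \<cdot> S(F\<^sub>k q)\<close> on
  the later layers. Let \<open>L\<close> be the affine map agreeing with \<open>F\<^sub>k\<close> where layer \<open>k\<close> has the signs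
  \<open>S(p) \<cdot> S(q)\<close>. Supertransversality at \<open>p\<close> writes \<open>c - a\<close> and \<open>L q - a\<close> as
  \<open>dF\<^sub>k(v\<^sub>i) + z\<^sub>i\<close> with \<open>v\<^sub>i\<close> tangent to the cell of \<open>p\<close> and \<open>z\<^sub>i\<close> tangent to the cell of
  \<open>a\<close>. Then \<open>r = p + s (v\<^sub>1 - v\<^sub>2 + q - p)\<close> has the layer-\<open>k\<close> signs \<open>S(p) \<cdot> S(q)\<close>, and
  \<open>F\<^sub>k r = a + s (c - a + z\<^sub>2 - z\<^sub>1)\<close> is the midpoint of \<open>a + 2s (z\<^sub>2 - z\<^sub>1)\<close>, which has
  the signs of \<open>a\<close>, and of \<open>(1 - 2s) a + 2s c\<close>, which has the signs of \<open>c\<close>; so for small \<open>s\<close>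
  it has the signs of \<open>c\<close> as well.
\<close>

section \<open>Affine functions of finitely many coordinates\<close>

definition affine_fun :: "nat \<Rightarrow> ((nat \<Rightarrow> real) \<Rightarrow> real) \<Rightarrow> bool" where
  "affine_fun d g \<longleftrightarrow> (\<exists>c c0. \<forall>x. g x = (\<Sum>l<d. c l * x l) + c0)"

lemma affine_fun_add_scaled:
  assumes "affine_fun d g"
  shows "g (\<lambda>l. x l + s * v l) = g x + s * (g v - g (\<lambda>_. 0))"
proof -
  obtain c c0 where g: "\<And>x. g x = (\<Sum>l<d. c l * x l) + c0" using assms(1) unfolding affine_fun_def by blast
  show ?thesis unfolding g by (simp add: distrib_left sum.distrib sum_distrib_left mult.left_commute)
qed

lemma affine_fun_add:
  assumes "affine_fun d g"
  shows "g (\<lambda>l. x l + v l) = g x + (g v - g (\<lambda>_. 0))"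
  using affine_fun_add_scaled[OF assms, of x 1 v] by simp

lemma affine_fun_diff:
  assumes "affine_fun d g"
  shows "g (\<lambda>l. v l - w l) - g (\<lambda>_. 0) = (g v - g (\<lambda>_. 0)) - (g w - g (\<lambda>_. 0))"
proof -
  obtain c c0 where g: "\<And>x. g x = (\<Sum>l<d. c l * x l) + c0" using assms(1) unfolding affine_fun_def by blast
  show ?thesis unfolding g by (simp add: right_diff_distrib sum_subtractf)
qed

lemma affine_fun_convex_comb:
  assumes "affine_fun d g"
  shows "g (\<lambda>l. (1 - t) * x l + t * y l) = (1 - t) * g x + t * g y"
proof -
  obtain c c0 where g: "\<And>x. g x = (\<Sum>l<d. c l * x l) + c0"
    using assms(1) unfolding affine_fun_def by blast
  have "(\<Sum>l<d. c l * ((1 - t) * x l + t * y l))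
      = (\<Sum>l<d. (1 - t) * (c l * x l) + t * (c l * y l))"
    by (rule sum.cong) (auto simp: algebra_simps)
  also have "\<dots> = (1 - t) * (\<Sum>l<d. c l * x l) + t * (\<Sum>l<d. c l * y l)"
    by (simp add: sum.distrib sum_distrib_left)
  finally show ?thesis unfolding g by (simp add: algebra_simps)
qed

lemma affine_fun_affine_comb:
  assumes "affine_fun d g" "sum u T = 1"
  shows "g (\<lambda>l. \<Sum>p\<in>T. u p * p l) = (\<Sum>p\<in>T. u p * g p)"
proof -
  obtain c c0 where g: "\<And>x. g x = (\<Sum>l<d. c l * x l) + c0" using assms(1) unfolding affine_fun_def by blast
  have "(\<Sum>l<d. c l * (\<Sum>p\<in>T. u p * p l)) = (\<Sum>p\<in>T. u p * (\<Sum>l<d. c l * p l))"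
    by (simp add: sum_distrib_left algebra_simps sum.swap[of _ T])
  moreover have "(\<Sum>p\<in>T. u p * c0) = c0" using assms(2) by (simp add: sum_distrib_right[symmetric])
  ultimately show ?thesis unfolding g by (simp add: distrib_left sum.distrib)
qed

lemma affine_fun_lipschitz:
  assumes "affine_fun d g"
  obtains B where "\<And>x y e. \<forall>l<d. \<bar>y l - x l\<bar> \<le> e \<Longrightarrow> \<bar>g y - g x\<bar> \<le> B * e"
proof -
  obtain c c0 where g: "\<And>x. g x = (\<Sum>l<d. c l * x l) + c0" using assms(1) unfolding affine_fun_def by blast
  show thesis
  proof (rule that)
    fix x y :: "nat \<Rightarrow> real" and e assume close: "\<forall>l<d. \<bar>y l - x l\<bar> \<le> e"
    have "\<bar>g y - g x\<bar> = \<bar>\<Sum>l<d. c l * (y l - x l)\<bar>"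
      unfolding g by (simp add: right_diff_distrib sum_subtractf)
    also have "\<dots> \<le> (\<Sum>l<d. \<bar>c l\<bar> * e)"
      by (rule order_trans[OF sum_abs sum_mono]) (use close in \<open>auto simp: abs_mult intro: mult_left_mono\<close>)
    finally show "\<bar>g y - g x\<bar> \<le> (\<Sum>l<d. \<bar>c l\<bar>) * e" by (simp add: sum_distrib_right)
  qed
qed

lemma affine_fun_const: "affine_fun d (\<lambda>x. a)"
  unfolding affine_fun_def by (intro exI[of _ "\<lambda>_. 0"] exI[of _ a]) simp

lemma affine_fun_coord:
  assumes "l < d"
  shows "affine_fun d (\<lambda>x. x l)"
  unfolding affine_fun_def
proof (intro exI allI)
  fix x :: "nat \<Rightarrow> real"
  show "x l = (\<Sum>l'<d. (if l' = l then 1 else 0) * x l') + 0"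
    using assms by (simp add: if_distrib[of "\<lambda>c. c * _"] sum.delta cong: if_cong)
qed

lemma affine_fun_affmap_comp:
  assumes "\<And>l. l < n (i - 1) \<Longrightarrow> affine_fun d (\<lambda>x. f x l)"
  shows "affine_fun d (\<lambda>x. affmap n W b i (f x) j)"
proof (cases "j < n i")
  case False
  then show ?thesis unfolding affmap_def by (simp add: affine_fun_const)
next
  case True
  have "\<forall>l\<in>{..<n (i - 1)}. \<exists>cc. \<forall>x. f x l = (\<Sum>q<d. fst cc q * x q) + snd cc"
    using assms unfolding affine_fun_def by auto
  then obtain cc where cc: "\<And>l x. l < n (i - 1) \<Longrightarrow> f x l = (\<Sum>q<d. fst (cc l) q * x q) + snd (cc l)"
    by (metis bchoice lessThan_iff)
  show ?thesis unfolding affine_fun_def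
  proof (intro exI allI)
    fix x
    have "affmap n W b i (f x) j
        = (\<Sum>l<n (i - 1). W i j l * ((\<Sum>q<d. fst (cc l) q * x q) + snd (cc l))) + b i j"
      unfolding affmap_def using True cc by simp
    also have "\<dots> = (\<Sum>q<d. (\<Sum>l<n (i - 1). W i j l * fst (cc l) q) * x q)
                    + ((\<Sum>l<n (i - 1). W i j l * snd (cc l)) + b i j)"
      by (simp add: distrib_left sum.distrib sum_distrib_left sum_distrib_right
          sum.swap[of _ "{..<d}"] algebra_simps)
    finally show "affmap n W b i (f x) j = \<dots>" .
  qed
qed

lemma affine_fun_affmap: "affine_fun (n (i - 1)) (\<lambda>x. affmap n W b i x j)"
  using affine_fun_affmap_comp[of n i "n (i - 1)" "\<lambda>x. x"] affine_fun_coord by auto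

lemma affine_fun_vanishes_affhull:
  assumes "affine_fun d g" "\<And>p. p \<in> S \<Longrightarrow> g p = 0" "y \<in> affhull S"
  shows "g y = 0"
proof -
  obtain T u where T: "T \<subseteq> S" "sum u T = 1" "y = (\<lambda>k. \<Sum>p\<in>T. u p * p k)"
    using assms(3) unfolding affhull_def by auto
  have "g y = (\<Sum>p\<in>T. u p * g p)" unfolding T(3) by (rule affine_fun_affine_comb[OF assms(1) T(2)])
  also have "\<dots> = 0" using assms(2) T(1) by (auto intro!: sum.neutral)
  finally show ?thesis .
qed

lemma relint_subset: "relint S \<subseteq> S"
  unfolding relint_def by auto

lemma affhull_subset_Rsp: "S \<subseteq> Rsp d \<Longrightarrow> affhull S \<subseteq> Rsp d"
  unfolding affhull_def Rsp_def by (auto intro!: sum.neutral)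

lemma tspace_relint_subset_Rsp:
  assumes "S \<subseteq> Rsp d"
  shows "tspace (relint S) \<subseteq> Rsp d"
proof
  fix v assume "v \<in> tspace (relint S)"
  then obtain y z where v: "v = (\<lambda>k. y k - z k)" "y \<in> affhull (relint S)" "z \<in> affhull (relint S)"
    unfolding tspace_def by auto
  have "affhull (relint S) \<subseteq> Rsp d" using affhull_subset_Rsp relint_subset assms by blast
  then have "y \<in> Rsp d" "z \<in> Rsp d" using v(2,3) by auto
  then show "v \<in> Rsp d" unfolding v(1) Rsp_def by auto
qed

lemma affine_fun_tspace_relint:
  assumes "affine_fun d g" "\<And>p. p \<in> S \<Longrightarrow> g p = 0" "v \<in> tspace (relint S)"
  shows "g v = g (\<lambda>_. 0)"
proof -
  obtain y z where v: "v = (\<lambda>k. y k - z k)" "y \<in> affhull (relint S)" "z \<in> affhull (relint S)"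
    using assms(3) unfolding tspace_def by auto
  have "g y = 0" "g z = 0"
    using affine_fun_vanishes_affhull[OF assms(1)] assms(2) relint_subset v(2,3) by blast+
  then show ?thesis using affine_fun_diff[OF assms(1), of y z] unfolding v(1) by simp
qed

lemma relint_extend:
  assumes y: "y \<in> relint S" and r: "r \<in> S" and S: "S \<subseteq> Rsp d"
  obtains y' t where "y' \<in> S" "0 < t" "t \<le> 1" "y = (\<lambda>l. (1 - t) * y' l + t * r l)"
proof (cases "y = r")
  case True
  then show ?thesis using r by (intro that[of r 1]) auto
next
  case False
  obtain e where e: "e > 0" "\<forall>z\<in>affhull S. (\<forall>l. \<bar>z l - y l\<bar> < e) \<longrightarrow> z \<in> S" and yS: "y \<in> S"
    using y unfolding relint_def by blast
  define D where "D = (\<Sum>l<d. \<bar>y l - r l\<bar>) + 1"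
  have D: "D \<ge> 1" unfolding D_def by (simp add: sum_nonneg)
  have dist: "\<bar>y l - r l\<bar> \<le> D" for l
  proof (cases "l < d")
    case True
    then have "\<bar>y l - r l\<bar> \<le> (\<Sum>l<d. \<bar>y l - r l\<bar>)" by (intro member_le_sum) auto
    then show ?thesis unfolding D_def by simp
  next
    case False
    then have "y l = 0" "r l = 0" using yS r S unfolding Rsp_def by auto
    then show ?thesis using D by simp
  qed
  define \<epsilon> where "\<epsilon> = e / (2 * D)"
  have \<epsilon>: "\<epsilon> > 0" "\<epsilon> * D < e" unfolding \<epsilon>_def using e D by auto
  define y' where "y' = (\<lambda>l. (1 + \<epsilon>) * y l - \<epsilon> * r l)"
  have "y' \<in> affhull S"
    unfolding affhull_def
  proof (intro CollectI exI conjI)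
    let ?u = "\<lambda>p. if p = y then 1 + \<epsilon> else - \<epsilon>"
    show "finite {y, r}" "{y, r} \<noteq> {}" "{y, r} \<subseteq> S" using yS r by auto
    show "sum ?u {y, r} = 1" using False by simp
    show "y' = (\<lambda>k. \<Sum>p\<in>{y, r}. ?u p * p k)" unfolding y'_def using False by auto
  qed
  moreover have "\<bar>y' l - y l\<bar> < e" for l
  proof -
    have "y' l - y l = \<epsilon> * (y l - r l)" unfolding y'_def by (simp add: algebra_simps)
    then have "\<bar>y' l - y l\<bar> = \<epsilon> * \<bar>y l - r l\<bar>" using \<epsilon>(1) by (simp add: abs_mult)
    also have "\<dots> \<le> \<epsilon> * D" using dist \<epsilon>(1) by (simp add: mult_left_mono)
    finally show ?thesis using \<epsilon>(2) by simp
  qed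
  ultimately have "y' \<in> S" using e(2) by blast
  moreover have "y = (\<lambda>l. (1 - \<epsilon> / (1 + \<epsilon>)) * y' l + \<epsilon> / (1 + \<epsilon>) * r l)"
    using \<epsilon>(1) unfolding y'_def by (simp add: divide_simps)
  ultimately show ?thesis using \<epsilon>(1) by (intro that[of y' "\<epsilon> / (1 + \<epsilon>)"]) auto
qed

section \<open>Sign conditions\<close>

lemma signcond_sgnz: "signcond (sgnz t) t"
  unfolding sgnz_def signcond_def by auto

lemma sgnz_eq_0_iff: "sgnz t = 0 \<longleftrightarrow> t = 0"
  unfolding sgnz_def by auto

lemma signcond_0: "signcond s 0"
  unfolding signcond_def by auto

lemma sgnz_eq_if_signcond: "signcond s t \<Longrightarrow> t \<noteq> 0 \<Longrightarrow> sgnz t = s"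
  unfolding signcond_def sgnz_def by (auto split: if_splits)

lemma relu_if_signcond: "signcond s t \<Longrightarrow> relu t = (if s = 1 then t else 0)"
  unfolding signcond_def relu_def by (auto split: if_splits)

lemma signcond_convex_comb:
  assumes "signcond s a" "signcond s c" "0 \<le> t" "t \<le> 1"
  shows "signcond s ((1 - t) * a + t * c)"
proof -
  have t: "0 \<le> 1 - t" using assms(4) by simp
  consider "s = 1" "0 \<le> a" "0 \<le> c" | "s = -1" "a \<le> 0" "c \<le> 0" | "a = 0" "c = 0"
    using assms(1,2) unfolding signcond_def by (auto split: if_splits)
  then show ?thesis
  proof cases
    case 1
    then show ?thesis using t assms(3) unfolding signcond_def by simp
  next
    case 2
    then have "(1 - t) * a \<le> 0" "t * c \<le> 0" using t assms(3) by (simp_all add: mult_nonneg_nonpos)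
    then show ?thesis using 2 unfolding signcond_def by simp
  qed (simp add: signcond_0)
qed

lemma convex_comb_eq_0_signcond:
  assumes "signcond s a" "signcond s c" "0 < t" "t < 1" "(1 - t) * a + t * c = 0"
  shows "a = 0 \<and> c = 0"
proof -
  have t: "0 < 1 - t" using assms(4) by simp
  consider "s = 1" "0 \<le> a" "0 \<le> c" | "s = -1" "a \<le> 0" "c \<le> 0" | "a = 0" "c = 0"
    using assms(1,2) unfolding signcond_def by (auto split: if_splits)
  then show ?thesis
  proof cases
    case 1
    then have "0 \<le> (1 - t) * a" "0 \<le> t * c" using t assms(3) by simp_all
    then show ?thesis using assms(3,5) t by (simp add: add_nonneg_eq_0_iff)
  next
    case 2
    then have "(1 - t) * a \<le> 0" "t * c \<le> 0" using t assms(3) by (simp_all add: mult_nonneg_nonpos)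
    then show ?thesis using assms(3,5) t by (simp add: add_nonpos_eq_0_iff)
  qed simp
qed

lemma sgnz_convex_comb:
  assumes "signcond (sgnz c) a" "0 < t" "t \<le> 1"
  shows "sgnz ((1 - t) * a + t * c) = sgnz c"
proof -
  have t: "0 \<le> 1 - t" using assms(3) by simp
  consider "0 < c" "0 \<le> a" | "c < 0" "a \<le> 0" | "c = 0" "a = 0"
    using assms(1) unfolding signcond_def sgnz_def by (auto split: if_splits)
  then show ?thesis
  proof cases
    case 1
    then have "0 < (1 - t) * a + t * c" using t assms(2) by (simp add: add_nonneg_pos)
    then show ?thesis using 1 unfolding sgnz_def by simp
  next
    case 2
    then have "(1 - t) * a + t * c < 0" using t assms(2)
      by (simp add: add_nonpos_neg mult_nonneg_nonpos mult_pos_neg)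
    then show ?thesis using 2 unfolding sgnz_def by simp
  qed simp
qed

lemma eventually_sgnz_add_small:
  fixes a c :: real
  assumes "a \<noteq> 0"
  shows "\<forall>\<^sub>F s in at_right 0. sgnz (a + s * c) = sgnz a"
proof -
  have lim: "((\<lambda>s. a + s * c) \<longlongrightarrow> a) (at_right 0)"
    by (auto intro!: tendsto_eq_intros)
  show ?thesis
  proof (cases "a > 0")
    case True
    from order_tendstoD(1)[OF lim True] show ?thesis
      by eventually_elim (use True in \<open>auto simp: sgnz_def\<close>)
  next
    case False
    with assms have "a < 0" by simp
    from order_tendstoD(2)[OF lim this] show ?thesis
      by eventually_elim (use \<open>a < 0\<close> in \<open>auto simp: sgnz_def\<close>)
  qed
qed

lemma eventually_at_right_0_obtain:
  assumes "\<forall>\<^sub>F s in at_right (0::real). P s"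
  obtains s where "s > 0" "P s"
proof -
  have "\<forall>\<^sub>F s in at_right (0::real). s > 0 \<and> P s"
    using eventually_at_right_less assms by (rule eventually_conj)
  from eventually_happens'[OF trivial_limit_at_right_real this] show thesis
    using that by blast
qed

lemma affine_fun_eventually_sgnz_near:
  assumes "affine_fun d g" "g x \<noteq> 0"
  shows "\<forall>\<^sub>F e in at_right 0. \<forall>y. (\<forall>l. \<bar>y l - x l\<bar> < e) \<longrightarrow> sgnz (g y) = sgnz (g x)"
proof -
  obtain B where B: "\<And>x y e. \<forall>l<d. \<bar>y l - x l\<bar> \<le> e \<Longrightarrow> \<bar>g y - g x\<bar> \<le> B * e"
    using affine_fun_lipschitz[OF assms(1)] by blast
  have "((\<lambda>e. B * e) \<longlongrightarrow> 0) (at_right 0)" by (auto intro!: tendsto_eq_intros)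
  from order_tendstoD(2)[OF this, of "\<bar>g x\<bar>"] assms(2)
  have "\<forall>\<^sub>F e in at_right 0. B * e < \<bar>g x\<bar>" by simp
  then show ?thesis
  proof eventually_elim
    case (elim e)
    show ?case
    proof (intro allI impI)
      fix y assume "\<forall>l. \<bar>y l - x l\<bar> < e"
      then have "\<forall>l<d. \<bar>y l - x l\<bar> \<le> e" by (simp add: less_imp_le)
      then have "\<bar>g y - g x\<bar> < \<bar>g x\<bar>" using B elim by (meson le_less_trans)
      then show "sgnz (g y) = sgnz (g x)" unfolding sgnz_def by (auto simp: abs_if split: if_splits)
    qed
  qed
qed

lemma relu_difference_quotient:
  fixes a \<beta> :: real
  assumes "a = 0 \<Longrightarrow> \<beta> = 0"
  shows "((\<lambda>t. (relu (a + t * \<beta>) - relu a) / t) \<longlongrightarrow> (if a > 0 then \<beta> else 0)) (at 0)"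
proof (rule tendsto_eventually)
  have lim: "((\<lambda>t. a + t * \<beta>) \<longlongrightarrow> a) (at 0)" by (auto intro!: tendsto_eq_intros)
  show "\<forall>\<^sub>F t in at 0. (relu (a + t * \<beta>) - relu a) / t = (if a > 0 then \<beta> else 0)"
  proof (cases a "0::real" rule: linorder_cases)
    case less
    from order_tendstoD(2)[OF lim less] show ?thesis
      by eventually_elim (use less in \<open>simp add: relu_def\<close>)
  next
    case equal
    then show ?thesis using assms by (simp add: relu_def)
  next
    case greater
    from order_tendstoD(1)[OF lim greater] eventually_neq_at_within[of 0 0 UNIV] show ?thesis
      by eventually_elim (use greater in \<open>simp add: relu_def\<close>)
  qed
qed

section \<open>Cells of a network given by sign vectors\<close>

context
  fixes n :: "nat \<Rightarrow> nat" and W :: "nat \<Rightarrow> nat \<Rightarrow> nat \<Rightarrow> real" and b :: "nat \<Rightarrow> nat \<Rightarrow> real"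
begin

text \<open>The part \<open>F^(k)\<close> of the network starting at layer \<open>k\<close> is described by
  \<^term>\<open>node_from k i j\<close>: the value of node \<open>j\<close> of layer \<open>i\<close> before the ReLU, as a function of
  the input of layer \<open>k\<close>.\<close>

fun layers_from :: "nat \<Rightarrow> nat \<Rightarrow> (nat \<Rightarrow> real) \<Rightarrow> (nat \<Rightarrow> real)" where
  "layers_from k 0 x = x"
| "layers_from k (Suc d) x = layer n W b (k + d) (layers_from k d x)"

definition node_from :: "nat \<Rightarrow> nat \<Rightarrow> nat \<Rightarrow> (nat \<Rightarrow> real) \<Rightarrow> real" where
  "node_from k i j x = affmap n W b i (layers_from k (i - k) x) j"

definition sign_cell :: "nat \<Rightarrow> nat \<Rightarrow> (nat \<Rightarrow> nat \<Rightarrow> int) \<Rightarrow> (nat \<Rightarrow> real) set" where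
  "sign_cell k M \<sigma> = {x \<in> Rsp (n (k - 1)).
     \<forall>i j. k \<le> i \<and> i \<le> M \<and> j < n i \<longrightarrow> signcond (\<sigma> i j) (node_from k i j x)}"

definition sign_vector :: "nat \<Rightarrow> nat \<Rightarrow> (nat \<Rightarrow> real) \<Rightarrow> nat \<Rightarrow> nat \<Rightarrow> int" where
  "sign_vector k M x =
     (\<lambda>i j. if k \<le> i \<and> i \<le> M \<and> j < n i then sgnz (node_from k i j x) else 0)"

text \<open>On \<^term>\<open>sign_cell k M \<sigma>\<close> every ReLU of the layers \<open>k, \<dots>, M\<close> acts as the fixed mask
  ``keep the coordinate iff \<open>\<sigma> = 1\<close>'', so there the network agrees with the following affine maps.\<close>

fun lin_layers :: "nat \<Rightarrow> (nat \<Rightarrow> nat \<Rightarrow> int) \<Rightarrow> nat \<Rightarrow> (nat \<Rightarrow> real) \<Rightarrow> (nat \<Rightarrow> real)" where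
  "lin_layers k \<sigma> 0 x = x"
| "lin_layers k \<sigma> (Suc d) x =
     (\<lambda>j. if j < n (k + d) \<and> \<sigma> (k + d) j = 1 then affmap n W b (k + d) (lin_layers k \<sigma> d x) j else 0)"

definition lin_node :: "nat \<Rightarrow> (nat \<Rightarrow> nat \<Rightarrow> int) \<Rightarrow> nat \<Rightarrow> nat \<Rightarrow> (nat \<Rightarrow> real) \<Rightarrow> real" where
  "lin_node k \<sigma> i j x = affmap n W b i (lin_layers k \<sigma> (i - k) x) j"

lemma layer_eq_0: "\<not> j < n i \<Longrightarrow> layer n W b i x j = 0"
  unfolding layer_def relu_def affmap_def by simp

lemma layer_in_Rsp: "layer n W b i x \<in> Rsp (n i)"
  unfolding Rsp_def using layer_eq_0 by auto

lemma layers_from_in_Rsp: "layers_from k (Suc d) x \<in> Rsp (n (k + d))"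
  using layer_in_Rsp by simp

lemma Fpre_eq_layers_from: "Fpre n W b i x = layers_from 1 i x"
  by (induction i) auto

lemma Flay_eq_layers_from: "Flay n W b k d x = layers_from k (Suc d) x"
  by (induction d) auto

lemma layers_from_Suc_shift: "layers_from k (Suc d) x = layers_from (Suc k) d (layer n W b k x)"
  by (induction d) auto

lemma node_eq_node_from: "node n W b i j x = node_from 1 i j x"
  unfolding node_def node_from_def Fpre_eq_layers_from by simp

lemma node_from_shift: "k < i \<Longrightarrow> node_from k i j x = node_from (Suc k) i j (layer n W b k x)"
  unfolding node_from_def by (metis Suc_diff_Suc layers_from_Suc_shift)

lemma node_from_self: "node_from k k j x = affmap n W b k x j"
  unfolding node_from_def by simp

lemma lin_node_self: "lin_node k \<sigma> k j x = affmap n W b k x j"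
  unfolding lin_node_def by simp

lemma affine_fun_lin_layers: "affine_fun (n (k - 1)) (\<lambda>x. lin_layers k \<sigma> (Suc d) x l)"
proof (induction d arbitrary: l)
  case 0
  show ?case
  proof (cases "l < n k \<and> \<sigma> k l = 1")
    case True
    then show ?thesis using affine_fun_affmap[of n k W b l] by simp
  next
    case False
    then have "(\<lambda>x. lin_layers k \<sigma> (Suc 0) x l) = (\<lambda>x. 0)" by auto
    then show ?thesis by (simp add: affine_fun_const)
  qed
next
  case (Suc d)
  show ?case
  proof (cases "l < n (k + Suc d) \<and> \<sigma> (k + Suc d) l = 1")
    case True
    have "affine_fun (n (k - 1)) (\<lambda>x. affmap n W b (k + Suc d) (lin_layers k \<sigma> (Suc d) x) l)"
      by (rule affine_fun_affmap_comp) (rule Suc.IH)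
    then show ?thesis using True by simp
  next
    case False
    then have "(\<lambda>x. lin_layers k \<sigma> (Suc (Suc d)) x l) = (\<lambda>x. 0)" by auto
    then show ?thesis by (simp add: affine_fun_const)
  qed
qed

lemma affine_fun_lin_node:
  assumes "k \<le> i"
  shows "affine_fun (n (k - 1)) (lin_node k \<sigma> i j)"
  unfolding lin_node_def
proof (rule affine_fun_affmap_comp)
  fix l assume l: "l < n (i - 1)"
  show "affine_fun (n (k - 1)) (\<lambda>x. lin_layers k \<sigma> (i - k) x l)"
  proof (cases "i = k")
    case True
    then show ?thesis using l by (simp add: affine_fun_coord)
  next
    case False
    with assms have "i - k = Suc (i - Suc k)" by simp
    then show ?thesis by (simp only:) (rule affine_fun_lin_layers)
  qed
qed

lemma layers_from_eq_lin_layers: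
  assumes "\<And>i j. k \<le> i \<Longrightarrow> i < k + d \<Longrightarrow> j < n i \<Longrightarrow>
             layers_from k (i - k) x = lin_layers k \<sigma> (i - k) x \<Longrightarrow>
             signcond (\<sigma> i j) (affmap n W b i (layers_from k (i - k) x) j)"
  shows "layers_from k d x = lin_layers k \<sigma> d x"
  using assms
proof (induction d)
  case 0
  then show ?case by simp
next
  case (Suc d)
  have IH: "layers_from k d x = lin_layers k \<sigma> d x"
    by (rule Suc.IH) (rule Suc.prems; simp)
  have sc: "signcond (\<sigma> (k + d) j) (affmap n W b (k + d) (layers_from k d x) j)" if "j < n (k + d)" for j
    using Suc.prems[of "k + d" j] that IH by simp
  show ?case
  proof
    fix j
    show "layers_from k (Suc d) x j = lin_layers k \<sigma> (Suc d) x j"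
    proof (cases "j < n (k + d)")
      case True
      then show ?thesis using sc[OF True] by (simp add: IH layer_def relu_if_signcond)
    next
      case False
      then show ?thesis by (simp add: layer_eq_0)
    qed
  qed
qed

lemma node_from_eq_lin_node:
  assumes "x \<in> sign_cell k M \<sigma>" "k \<le> i" "i \<le> M"
  shows "node_from k i j x = lin_node k \<sigma> i j x"
proof -
  have "signcond (\<sigma> i' j') (affmap n W b i' (layers_from k (i' - k) x) j')"
    if "k \<le> i'" "i' < k + (i - k)" "j' < n i'" for i' j'
    using assms that by (auto simp: sign_cell_def node_from_def)
  then have "layers_from k (i - k) x = lin_layers k \<sigma> (i - k) x"
    using layers_from_eq_lin_layers by blast
  then show ?thesis unfolding node_from_def lin_node_def by simp
qed

lemma sign_cell_lin_node:
  "sign_cell k M \<sigma> = {x \<in> Rsp (n (k - 1)).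
     \<forall>i j. k \<le> i \<and> i \<le> M \<and> j < n i \<longrightarrow> signcond (\<sigma> i j) (lin_node k \<sigma> i j x)}"
proof (intro set_eqI iffI)
  fix x assume x: "x \<in> sign_cell k M \<sigma>"
  then show "x \<in> {x \<in> Rsp (n (k - 1)).
     \<forall>i j. k \<le> i \<and> i \<le> M \<and> j < n i \<longrightarrow> signcond (\<sigma> i j) (lin_node k \<sigma> i j x)}"
    using node_from_eq_lin_node[OF x, symmetric] by (auto simp: sign_cell_def)
next
  fix x assume x: "x \<in> {x \<in> Rsp (n (k - 1)).
     \<forall>i j. k \<le> i \<and> i \<le> M \<and> j < n i \<longrightarrow> signcond (\<sigma> i j) (lin_node k \<sigma> i j x)}"
  have "layers_from k (i - k) x = lin_layers k \<sigma> (i - k) x" if "i \<le> M" for i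
    by (rule layers_from_eq_lin_layers) (use x that in \<open>auto simp: lin_node_def\<close>)
  then show "x \<in> sign_cell k M \<sigma>"
    using x by (auto simp: sign_cell_def node_from_def lin_node_def)
qed

lemma sign_cell_subset_Rsp: "sign_cell k M \<sigma> \<subseteq> Rsp (n (k - 1))"
  unfolding sign_cell_def by auto

lemma sign_cell_single:
  "sign_cell k k \<sigma> = {x \<in> Rsp (n (k - 1)). \<forall>j<n k. signcond (\<sigma> k j) (affmap n W b k x j)}"
proof -
  have "(\<forall>i j. k \<le> i \<and> i \<le> k \<and> j < n i \<longrightarrow> P i j) \<longleftrightarrow> (\<forall>j<n k. P k j)" for P
    by (metis le_antisym order_refl)
  then show ?thesis unfolding sign_cell_def by (simp add: node_from_self)
qed

lemma sign_cell_Suc: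
  assumes "k \<le> M"
  shows "sign_cell k (Suc M) \<sigma>
       = sign_cell k M \<sigma> \<inter> {x. layers_from k (Suc M - k) x \<in> sign_cell (Suc M) (Suc M) \<sigma>}"
proof -
  have d: "Suc M - k = Suc (M - k)" "k + (M - k) = M" using assms by auto
  have "layers_from k (Suc M - k) x \<in> Rsp (n M)" for x
    using layers_from_in_Rsp[of k "M - k" x] unfolding d by simp
  moreover have "node_from k (Suc M) j x = affmap n W b (Suc M) (layers_from k (Suc M - k) x) j" for j x
    unfolding node_from_def ..
  moreover have "(\<forall>i j. k \<le> i \<and> i \<le> Suc M \<and> j < n i \<longrightarrow> P i j) \<longleftrightarrow>
      (\<forall>i j. k \<le> i \<and> i \<le> M \<and> j < n i \<longrightarrow> P i j) \<and> (\<forall>j<n (Suc M). P (Suc M) j)" for P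
    using assms by (fastforce simp: le_Suc_eq)
  ultimately show ?thesis unfolding sign_cell_single sign_cell_def by auto
qed

lemma Rcells_eq_sign_cells: "Rcells n W b k = {R. R \<noteq> {} \<and> (\<exists>\<sigma>. R = sign_cell k k \<sigma>)}"
proof (intro set_eqI iffI)
  fix R assume "R \<in> Rcells n W b k"
  then obtain \<sigma> where "R \<noteq> {}"
    "R = {x \<in> Rsp (n (k - 1)). \<forall>j<n k. signcond (\<sigma> j) (affmap n W b k x j)}"
    unfolding Rcells_def by blast
  then show "R \<in> {R. R \<noteq> {} \<and> (\<exists>\<sigma>. R = sign_cell k k \<sigma>)}"
    unfolding sign_cell_single by (auto intro!: exI[of _ "\<lambda>_. \<sigma>"])
next
  fix R assume "R \<in> {R. R \<noteq> {} \<and> (\<exists>\<sigma>. R = sign_cell k k \<sigma>)}"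
  then obtain \<sigma> where R: "R \<noteq> {}" "R = sign_cell k k \<sigma>" by blast
  define \<sigma>' where "\<sigma>' j = (if \<sigma> k j \<in> {-1, 1} then \<sigma> k j else 0)" for j
  have "signcond (\<sigma>' j) t = signcond (\<sigma> k j) t" for j t
    unfolding \<sigma>'_def signcond_def by auto
  then have "R = {x \<in> Rsp (n (k - 1)). \<forall>j<n k. signcond (\<sigma>' j) (affmap n W b k x j)}"
    unfolding R(2) sign_cell_single by simp
  moreover have "\<forall>j<n k. \<sigma>' j \<in> {-1, 0, 1}" unfolding \<sigma>'_def by auto
  ultimately show "R \<in> Rcells n W b k" unfolding Rcells_def using R(1) by blast
qed

lemma cplx_eq_sign_cells: "cplx n W b k d = {E. E \<noteq> {} \<and> (\<exists>\<sigma>. E = sign_cell k (k + d) \<sigma>)}"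
proof (induction d)
  case 0
  then show ?case using Rcells_eq_sign_cells by simp
next
  case (Suc d)
  let ?M = "k + d"
  have split: "sign_cell k (Suc ?M) \<sigma>
      = sign_cell k ?M \<sigma> \<inter> {x. Flay n W b k d x \<in> sign_cell (Suc ?M) (Suc ?M) \<sigma>}" for \<sigma>
    using sign_cell_Suc[of k ?M] by (simp add: Flay_eq_layers_from Suc_diff_le)
  show ?case
  proof (intro set_eqI iffI)
    fix E assume "E \<in> cplx n W b k (Suc d)"
    then obtain C R where E: "E \<noteq> {}" "C \<in> cplx n W b k d" "R \<in> Rcells n W b (Suc ?M)"
      "E = C \<inter> {x. Flay n W b k d x \<in> R}" by auto
    obtain \<sigma> \<tau> where C: "C = sign_cell k ?M \<sigma>" and R: "R = sign_cell (Suc ?M) (Suc ?M) \<tau>"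
      using E(2,3) unfolding Suc.IH Rcells_eq_sign_cells by blast
    define \<rho> where "\<rho> = \<sigma>(Suc ?M := \<tau> (Suc ?M))"
    have "sign_cell k ?M \<rho> = C" "sign_cell (Suc ?M) (Suc ?M) \<rho> = R"
      unfolding C R sign_cell_def \<rho>_def by auto
    then have "E = sign_cell k (Suc ?M) \<rho>" unfolding split E(4) by simp
    then show "E \<in> {E. E \<noteq> {} \<and> (\<exists>\<sigma>. E = sign_cell k (k + Suc d) \<sigma>)}" using E(1) by auto
  next
    fix E assume "E \<in> {E. E \<noteq> {} \<and> (\<exists>\<sigma>. E = sign_cell k (k + Suc d) \<sigma>)}"
    then obtain \<sigma> where E: "E \<noteq> {}" "E = sign_cell k (Suc ?M) \<sigma>" by auto
    have "sign_cell k ?M \<sigma> \<in> cplx n W b k d" "sign_cell (Suc ?M) (Suc ?M) \<sigma> \<in> Rcells n W b (Suc ?M)"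
      using E unfolding Suc.IH Rcells_eq_sign_cells split by auto
    then show "E \<in> cplx n W b k (Suc d)" using E unfolding split by auto
  qed
qed

lemma sign_cell_signcond:
  "x \<in> sign_cell k M \<sigma> \<Longrightarrow> k \<le> i \<Longrightarrow> i \<le> M \<Longrightarrow> j < n i \<Longrightarrow> signcond (\<sigma> i j) (node_from k i j x)"
  unfolding sign_cell_def by blast

lemma sign_cell_sign_vector: "x \<in> Rsp (n (k - 1)) \<Longrightarrow> x \<in> sign_cell k M (sign_vector k M x)"
  unfolding sign_cell_def sign_vector_def by (auto simp: signcond_sgnz)

lemma sign_vector_single:
  "sign_vector k k x i j = (if i = k \<and> j < n k then sgnz (affmap n W b k x j) else 0)"
  unfolding sign_vector_def by (auto simp: node_from_self)

lemma sign_vector_split: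
  assumes "k \<le> M"
  shows "sign_vector k M x i j =
    (if i = k then sign_vector k k x i j else sign_vector (Suc k) M (layer n W b k x) i j)"
  using assms unfolding sign_vector_def by (auto simp: node_from_shift[of k])

lemma sign_vector_sprodI:
  assumes "k \<le> M"
    and "sign_vector k k r = sprod (sign_vector k k p) (sign_vector k k q)"
    and "sign_vector (Suc k) M (layer n W b k r)
       = sprod (sign_vector (Suc k) M (layer n W b k p)) (sign_vector (Suc k) M (layer n W b k q))"
  shows "sign_vector k M r = sprod (sign_vector k M p) (sign_vector k M q)"
proof (intro ext)
  fix i j
  have "sign_vector k k r i j = sprod (sign_vector k k p) (sign_vector k k q) i j"
    "sign_vector (Suc k) M (layer n W b k r) i j
      = sprod (sign_vector (Suc k) M (layer n W b k p)) (sign_vector (Suc k) M (layer n W b k q)) i j"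
    using assms(2,3) by simp_all
  then show "sign_vector k M r i j = sprod (sign_vector k M p) (sign_vector k M q) i j"
    unfolding sprod_def sign_vector_split[OF assms(1), of _ i j] by (cases "i = k") simp_all
qed

lemma sign_cell_convex:
  assumes "x \<in> sign_cell k M \<sigma>" "y \<in> sign_cell k M \<sigma>" "0 \<le> t" "t \<le> 1"
  shows "(\<lambda>l. (1 - t) * x l + t * y l) \<in> sign_cell k M \<sigma>"
proof -
  have "x \<in> Rsp (n (k - 1))" "y \<in> Rsp (n (k - 1))" using assms(1,2) sign_cell_subset_Rsp by blast+
  then have "(\<lambda>l. (1 - t) * x l + t * y l) \<in> Rsp (n (k - 1))" unfolding Rsp_def by simp
  moreover have "signcond (\<sigma> i j) (lin_node k \<sigma> i j (\<lambda>l. (1 - t) * x l + t * y l))"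
    if "k \<le> i" "i \<le> M" "j < n i" for i j
    unfolding affine_fun_convex_comb[OF affine_fun_lin_node[OF that(1)]]
    using assms that by (intro signcond_convex_comb) (auto simp: sign_cell_lin_node)
  ultimately show ?thesis unfolding sign_cell_lin_node by blast
qed

lemma node_from_convex_comb:
  assumes "x \<in> sign_cell k M \<sigma>" "y \<in> sign_cell k M \<sigma>" "0 \<le> t" "t \<le> 1" "k \<le> i" "i \<le> M"
  shows "node_from k i j (\<lambda>l. (1 - t) * x l + t * y l) = (1 - t) * node_from k i j x + t * node_from k i j y"
  using node_from_eq_lin_node[OF sign_cell_convex[OF assms(1-4)] assms(5,6)]
    node_from_eq_lin_node[OF assms(1) assms(5,6)] node_from_eq_lin_node[OF assms(2) assms(5,6)]
    affine_fun_convex_comb[OF affine_fun_lin_node[OF assms(5)]]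
  by simp

lemma sign_vector_convex_comb:
  assumes x: "x \<in> sign_cell k M (sign_vector k M y)" and y: "y \<in> Rsp (n (k - 1))"
    and t: "0 < t" "t \<le> 1"
  shows "sign_vector k M (\<lambda>l. (1 - t) * x l + t * y l) = sign_vector k M y"
proof (intro ext)
  fix i j
  show "sign_vector k M (\<lambda>l. (1 - t) * x l + t * y l) i j = sign_vector k M y i j"
  proof (cases "k \<le> i \<and> i \<le> M \<and> j < n i")
    case True
    then have "signcond (sgnz (node_from k i j y)) (node_from k i j x)"
      using sign_cell_signcond[OF x] unfolding sign_vector_def by auto
    moreover have "node_from k i j (\<lambda>l. (1 - t) * x l + t * y l)
        = (1 - t) * node_from k i j x + t * node_from k i j y"
      using True t by (intro node_from_convex_comb[OF x sign_cell_sign_vector[OF y]]) auto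
    ultimately show ?thesis using True t by (simp add: sign_vector_def sgnz_convex_comb)
  next
    case False
    then show ?thesis unfolding sign_vector_def by auto
  qed
qed

lemma sign_cell_subset_sprod: "sign_cell k M \<sigma> \<subseteq> sign_cell k M (sprod \<sigma> \<tau>)"
  unfolding sign_cell_def sprod_def signcond_def by auto

lemma sign_cell_face: "faceof (sign_cell k M \<sigma>) (sign_cell k M (sprod \<sigma> \<tau>))"
proof -
  have extreme: "a \<in> sign_cell k M \<sigma> \<and> c \<in> sign_cell k M \<sigma>"
    if a: "a \<in> sign_cell k M (sprod \<sigma> \<tau>)" and c: "c \<in> sign_cell k M (sprod \<sigma> \<tau>)"
      and x: "x \<in> sign_cell k M \<sigma>" and t: "0 < t" "t < 1" and xac: "x = (\<lambda>l. (1 - t) * a l + t * c l)"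
    for a c x t
  proof -
    have "signcond (\<sigma> i j) (node_from k i j a) \<and> signcond (\<sigma> i j) (node_from k i j c)"
      if ij: "k \<le> i" "i \<le> M" "j < n i" for i j
    proof (cases "\<sigma> i j = 0")
      case True
      have "signcond (\<tau> i j) (node_from k i j a)" "signcond (\<tau> i j) (node_from k i j c)"
        using sign_cell_signcond[OF a ij] sign_cell_signcond[OF c ij] True unfolding sprod_def by auto
      moreover have "(1 - t) * node_from k i j a + t * node_from k i j c = 0"
        using sign_cell_signcond[OF x ij] True node_from_convex_comb[OF a c, of t i j] t ij
        unfolding xac signcond_def by auto
      ultimately show ?thesis using convex_comb_eq_0_signcond t by (metis signcond_0)
    next
      case False
      then show ?thesis using sign_cell_signcond[OF a ij] sign_cell_signcond[OF c ij]
        unfolding sprod_def by auto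
    qed
    then show ?thesis using a c unfolding sign_cell_def by auto
  qed
  show ?thesis
    unfolding faceof_def convexset_def using sign_cell_subset_sprod sign_cell_convex extreme by blast
qed

lemma eventually_all_nodes:
  assumes "\<And>i j. k \<le> i \<Longrightarrow> i \<le> M \<Longrightarrow> j < n i \<Longrightarrow> eventually (P i j) F"
  shows "eventually (\<lambda>x. \<forall>i j. k \<le> i \<and> i \<le> M \<and> j < n i \<longrightarrow> P i j x) F"
proof -
  have "finite (SIGMA i:{k..M}. {..<n i})" by auto
  then have "eventually (\<lambda>x. \<forall>\<kappa>\<in>(SIGMA i:{k..M}. {..<n i}). P (fst \<kappa>) (snd \<kappa>) x) F"
    by (rule eventually_ball_finite) (use assms in auto)
  then show ?thesis by eventually_elim auto
qed

section \<open>Relative interiors and generic points of cells\<close>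

lemma lin_node_vanishes_sign_cell:
  assumes "p \<in> sign_cell k M \<sigma>" "k \<le> i" "i \<le> M" "j < n i" "\<sigma> i j = 0"
  shows "lin_node k \<sigma> i j p = 0"
  using assms unfolding sign_cell_lin_node signcond_def by auto

lemma lin_node_tspace_relint:
  assumes "v \<in> tspace (relint (sign_cell k M \<sigma>))" "k \<le> i" "i \<le> M" "j < n i" "\<sigma> i j = 0"
  shows "lin_node k \<sigma> i j v = lin_node k \<sigma> i j (\<lambda>_. 0)"
  using affine_fun_tspace_relint[OF affine_fun_lin_node[OF assms(2)] _ assms(1)]
    lin_node_vanishes_sign_cell assms(2-5) by blast

lemma in_relint_sign_cell:
  assumes x: "x \<in> Rsp (n (k - 1))"
  shows "x \<in> relint (sign_cell k M (sign_vector k M x))"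
proof -
  define \<sigma> where "\<sigma> = sign_vector k M x"
  have xE: "x \<in> sign_cell k M \<sigma>" unfolding \<sigma>_def by (rule sign_cell_sign_vector[OF x])
  have sx: "\<sigma> i j = sgnz (lin_node k \<sigma> i j x)" if "k \<le> i" "i \<le> M" "j < n i" for i j
    using that node_from_eq_lin_node[OF xE] unfolding \<sigma>_def sign_vector_def by auto
  have "\<forall>\<^sub>F e in at_right 0. \<sigma> i j \<noteq> 0 \<longrightarrow>
          (\<forall>y. (\<forall>l. \<bar>y l - x l\<bar> < e) \<longrightarrow> sgnz (lin_node k \<sigma> i j y) = \<sigma> i j)"
    if ij: "k \<le> i" "i \<le> M" "j < n i" for i j
  proof (cases "\<sigma> i j = 0")
    case False
    then have "lin_node k \<sigma> i j x \<noteq> 0" using sx[OF ij] unfolding sgnz_def by auto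
    from affine_fun_eventually_sgnz_near[OF affine_fun_lin_node[OF ij(1)] this]
    show ?thesis using sx[OF ij] by auto
  qed simp
  note ev = eventually_all_nodes[of k M, OF this]
  obtain e where e: "e > 0" and near: "\<forall>i j. k \<le> i \<and> i \<le> M \<and> j < n i \<longrightarrow> \<sigma> i j \<noteq> 0 \<longrightarrow>
      (\<forall>y. (\<forall>l. \<bar>y l - x l\<bar> < e) \<longrightarrow> sgnz (lin_node k \<sigma> i j y) = \<sigma> i j)"
    by (rule eventually_at_right_0_obtain[OF ev]) simp
  have "y \<in> sign_cell k M \<sigma>" if y: "y \<in> affhull (sign_cell k M \<sigma>)" "\<forall>l. \<bar>y l - x l\<bar> < e" for y
  proof -
    have "y \<in> Rsp (n (k - 1))" using affhull_subset_Rsp[OF sign_cell_subset_Rsp] y(1) by blast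
    moreover have "signcond (\<sigma> i j) (lin_node k \<sigma> i j y)" if ij: "k \<le> i" "i \<le> M" "j < n i" for i j
    proof (cases "\<sigma> i j = 0")
      case True
      then show ?thesis
        using affine_fun_vanishes_affhull[OF affine_fun_lin_node[OF ij(1)] _ y(1)]
          lin_node_vanishes_sign_cell ij by (simp add: signcond_0)
    next
      case False
      then have "sgnz (lin_node k \<sigma> i j y) = \<sigma> i j" using near ij y(2) by blast
      then show ?thesis using signcond_sgnz[of "lin_node k \<sigma> i j y"] by simp
    qed
    ultimately show ?thesis unfolding sign_cell_lin_node by blast
  qed
  then show ?thesis using xE e unfolding relint_def \<sigma>_def by blast
qed

lemma sign_vector_relint:
  assumes r: "r \<in> Rsp (n (k - 1))" and y: "y \<in> relint (sign_cell k M (sign_vector k M r))"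
  shows "sign_vector k M y = sign_vector k M r"
proof -
  obtain y' t where "y' \<in> sign_cell k M (sign_vector k M r)" "0 < t" "t \<le> 1"
    "y = (\<lambda>l. (1 - t) * y' l + t * r l)"
    using relint_extend[OF y sign_cell_sign_vector[OF r] sign_cell_subset_Rsp] .
  then show ?thesis using sign_vector_convex_comb[OF _ r] by blast
qed

lemma node_from_midpoint_neq_0:
  assumes x: "x \<in> sign_cell k M \<sigma>" and y: "y \<in> sign_cell k M \<sigma>" and ij: "k \<le> i" "i \<le> M" "j < n i"
    and "node_from k i j x \<noteq> 0 \<or> node_from k i j y \<noteq> 0"
  shows "node_from k i j (\<lambda>l. (1 - 1 / 2) * x l + 1 / 2 * y l) \<noteq> 0"
  using node_from_convex_comb[OF x y, of "1 / 2" i j]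
    convex_comb_eq_0_signcond[OF sign_cell_signcond[OF x ij] sign_cell_signcond[OF y ij], of "1 / 2"] assms
  by auto

lemma sign_cell_generic_point:
  assumes "sign_cell k M \<sigma> \<noteq> {}"
  obtains x where "x \<in> sign_cell k M \<sigma>"
    "\<And>i j y. k \<le> i \<Longrightarrow> i \<le> M \<Longrightarrow> j < n i \<Longrightarrow> y \<in> sign_cell k M \<sigma> \<Longrightarrow>
       node_from k i j y \<noteq> 0 \<Longrightarrow> node_from k i j x \<noteq> 0"
proof -
  define E where "E = sign_cell k M \<sigma>"
  define I where "I = (SIGMA i:{k..M}. {..<n i})"
  have "\<exists>x\<in>E. \<forall>(i, j)\<in>S. (\<exists>y\<in>E. node_from k i j y \<noteq> 0) \<longrightarrow> node_from k i j x \<noteq> 0"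
    if "finite S" "S \<subseteq> I" for S
    using that
  proof (induction S rule: finite_induct)
    case empty
    then show ?case using assms unfolding E_def by auto
  next
    case (insert \<kappa> S)
    then obtain x where x: "x \<in> E"
      and xS: "\<forall>(i, j)\<in>S. (\<exists>y\<in>E. node_from k i j y \<noteq> 0) \<longrightarrow> node_from k i j x \<noteq> 0"
      by auto
    obtain i j where \<kappa>: "\<kappa> = (i, j)" by fastforce
    show ?case
    proof (cases "node_from k i j x = 0 \<and> (\<exists>y\<in>E. node_from k i j y \<noteq> 0)")
      case False
      then show ?thesis using x xS \<kappa> by auto
    next
      case True
      then obtain y where y: "y \<in> E" "node_from k i j y \<noteq> 0" by auto
      let ?z = "\<lambda>l. (1 - 1 / 2) * x l + 1 / 2 * y l"
      have "?z \<in> E" using x y(1) unfolding E_def by (intro sign_cell_convex) auto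
      moreover have "node_from k i' j' ?z \<noteq> 0"
        if "(i', j') \<in> insert \<kappa> S" "\<exists>y\<in>E. node_from k i' j' y \<noteq> 0" for i' j'
      proof -
        have "node_from k i' j' x \<noteq> 0 \<or> node_from k i' j' y \<noteq> 0"
          using that xS y(2) \<kappa> by auto
        then show ?thesis
          using that(1) insert.prems x y(1) unfolding E_def I_def by (intro node_from_midpoint_neq_0) auto
      qed
      ultimately show ?thesis by blast
    qed
  qed
  from this[of I] obtain x where x: "x \<in> E"
    and generic: "\<forall>(i, j)\<in>I. (\<exists>y\<in>E. node_from k i j y \<noteq> 0) \<longrightarrow> node_from k i j x \<noteq> 0"
    unfolding I_def by auto
  show thesis
  proof (rule that)
    show "x \<in> sign_cell k M \<sigma>" using x unfolding E_def .
    fix i j y assume "k \<le> i" "i \<le> M" "j < n i" "y \<in> sign_cell k M \<sigma>" "node_from k i j y \<noteq> 0"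
    then show "node_from k i j x \<noteq> 0" using generic unfolding E_def I_def by fastforce
  qed
qed

lemma sign_cell_eq_sign_vector_cell:
  assumes x: "x \<in> sign_cell k M \<sigma>"
    and generic: "\<And>i j y. k \<le> i \<Longrightarrow> i \<le> M \<Longrightarrow> j < n i \<Longrightarrow> y \<in> sign_cell k M \<sigma> \<Longrightarrow>
       node_from k i j y \<noteq> 0 \<Longrightarrow> node_from k i j x \<noteq> 0"
  shows "sign_cell k M \<sigma> = sign_cell k M (sign_vector k M x)"
proof -
  have key: "signcond (\<sigma> i j) (node_from k i j y) \<longleftrightarrow> signcond (sign_vector k M x i j) (node_from k i j y)"
    if ij: "k \<le> i" "i \<le> M" "j < n i" and y: "y \<in> sign_cell k M \<sigma> \<or> y \<in> sign_cell k M (sign_vector k M x)"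
    for i j y
  proof (cases "node_from k i j x = 0")
    case True
    then have "sign_vector k M x i j = 0" using ij unfolding sign_vector_def sgnz_def by simp
    then have "node_from k i j y = 0"
      using y generic[OF ij] True sign_cell_signcond[OF _ ij, of y] unfolding signcond_def by force
    then show ?thesis by (simp add: signcond_0)
  next
    case False
    then have "sign_vector k M x i j = \<sigma> i j"
      using ij sgnz_eq_if_signcond[OF sign_cell_signcond[OF x ij]] unfolding sign_vector_def by simp
    then show ?thesis by simp
  qed
  show ?thesis
  proof (intro set_eqI iffI)
    fix y assume "y \<in> sign_cell k M \<sigma>"
    then show "y \<in> sign_cell k M (sign_vector k M x)"
      using key[of _ _ y] unfolding sign_cell_def by blast
  next
    fix y assume "y \<in> sign_cell k M (sign_vector k M x)"
    then show "y \<in> sign_cell k M \<sigma>"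
      using key[of _ _ y] unfolding sign_cell_def by blast
  qed
qed

lemma nonempty_sign_cell_eq_sign_vector_cell:
  assumes "sign_cell k M \<sigma> \<noteq> {}"
  obtains x where "x \<in> Rsp (n (k - 1))" "sign_cell k M \<sigma> = sign_cell k M (sign_vector k M x)"
proof (rule sign_cell_generic_point[OF assms])
  fix x assume x: "x \<in> sign_cell k M \<sigma>"
    and generic: "\<And>i j y. k \<le> i \<Longrightarrow> i \<le> M \<Longrightarrow> j < n i \<Longrightarrow> y \<in> sign_cell k M \<sigma> \<Longrightarrow>
       node_from k i j y \<noteq> 0 \<Longrightarrow> node_from k i j x \<noteq> 0"
  show thesis
  proof (rule that)
    show "x \<in> Rsp (n (k - 1))" using x sign_cell_subset_Rsp by blast
    show "sign_cell k M \<sigma> = sign_cell k M (sign_vector k M x)"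
      by (rule sign_cell_eq_sign_vector_cell[OF x generic])
  qed
qed

lemma cplx_eq_sign_vector_cell:
  assumes "X \<in> cplx n W b k d"
  obtains x where "x \<in> Rsp (n (k - 1))" "X = sign_cell k (k + d) (sign_vector k (k + d) x)"
proof -
  obtain \<sigma> where \<sigma>: "sign_cell k (k + d) \<sigma> \<noteq> {}" "X = sign_cell k (k + d) \<sigma>"
    using assms unfolding cplx_eq_sign_cells by blast
  show thesis
  proof (rule nonempty_sign_cell_eq_sign_vector_cell[OF \<sigma>(1)])
    fix x assume "x \<in> Rsp (n (k - 1))" "sign_cell k (k + d) \<sigma> = sign_cell k (k + d) (sign_vector k (k + d) x)"
    then show thesis using that \<sigma>(2) by simp
  qed
qed

lemma sign_vector_cell_in_cplx:
  "x \<in> Rsp (n (k - 1)) \<Longrightarrow> sign_cell k (k + d) (sign_vector k (k + d) x) \<in> cplx n W b k d"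
  unfolding cplx_eq_sign_cells using sign_cell_sign_vector[of x k "k + d"] by auto

lemma signseq_eq_sign_vector: "signseq m n W b X = sign_vector 1 (Suc m) (SOME x. x \<in> relint X)"
  unfolding signseq_def sign_vector_def node_eq_node_from by simp

lemma signseq_sign_vector_cell:
  assumes x: "x \<in> Rsp (n 0)"
  shows "signseq m n W b (sign_cell 1 (Suc m) (sign_vector 1 (Suc m) x)) = sign_vector 1 (Suc m) x"
proof -
  let ?E = "sign_cell 1 (Suc m) (sign_vector 1 (Suc m) x)"
  have "x \<in> relint ?E" using in_relint_sign_cell x by simp
  then have "(SOME y. y \<in> relint ?E) \<in> relint ?E" by (rule someI[of "\<lambda>y. y \<in> relint ?E"])
  then have "sign_vector 1 (Suc m) (SOME y. y \<in> relint ?E) = sign_vector 1 (Suc m) x"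
    by (intro sign_vector_relint) (use x in simp_all)
  then show ?thesis unfolding signseq_eq_sign_vector .
qed

section \<open>Moving a point without changing its signs\<close>

definition cell_direction :: "nat \<Rightarrow> nat \<Rightarrow> (nat \<Rightarrow> real) \<Rightarrow> (nat \<Rightarrow> real) \<Rightarrow> bool" where
  "cell_direction k M x v \<longleftrightarrow> (\<forall>i j. k \<le> i \<and> i \<le> M \<and> j < n i \<and> sign_vector k M x i j = 0 \<longrightarrow>
     lin_node k (sign_vector k M x) i j v = lin_node k (sign_vector k M x) i j (\<lambda>_. 0))"

lemma cell_direction_single:
  "cell_direction k k p v \<longleftrightarrow>
     (\<forall>j<n k. affmap n W b k p j = 0 \<longrightarrow> affmap n W b k v j = affmap n W b k (\<lambda>_. 0) j)"
proof -
  have "(\<forall>i j. k \<le> i \<and> i \<le> k \<and> j < n i \<and> Q i j \<longrightarrow> P i j) \<longleftrightarrow> (\<forall>j<n k. Q k j \<longrightarrow> P k j)" for P Q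
    by (metis le_antisym order_refl)
  then show ?thesis unfolding cell_direction_def by (simp add: lin_node_self sign_vector_single sgnz_eq_0_iff)
qed

lemma cell_direction_diff:
  assumes "cell_direction k M x v" "cell_direction k M x w"
  shows "cell_direction k M x (\<lambda>l. v l - w l)"
  unfolding cell_direction_def
proof (intro allI impI)
  fix i j assume ij: "k \<le> i \<and> i \<le> M \<and> j < n i \<and> sign_vector k M x i j = 0"
  then show "lin_node k (sign_vector k M x) i j (\<lambda>l. v l - w l) = lin_node k (sign_vector k M x) i j (\<lambda>_. 0)"
    using assms affine_fun_diff[OF affine_fun_lin_node, of k i "sign_vector k M x" j v w]
    unfolding cell_direction_def by simp
qed

lemma cell_direction_scale:
  assumes "cell_direction k M x v"
  shows "cell_direction k M x (\<lambda>l. s * v l)"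
  unfolding cell_direction_def
proof (intro allI impI)
  fix i j assume ij: "k \<le> i \<and> i \<le> M \<and> j < n i \<and> sign_vector k M x i j = 0"
  then show "lin_node k (sign_vector k M x) i j (\<lambda>l. s * v l) = lin_node k (sign_vector k M x) i j (\<lambda>_. 0)"
    using assms affine_fun_add_scaled[OF affine_fun_lin_node, of k i "sign_vector k M x" j "\<lambda>_. 0" s v]
    unfolding cell_direction_def by simp
qed

lemma cell_direction_tspace:
  "v \<in> tspace (relint (sign_cell k M (sign_vector k M x))) \<Longrightarrow> cell_direction k M x v"
  unfolding cell_direction_def using lin_node_tspace_relint by blast

lemma sign_vector_eqI:
  assumes x: "x \<in> Rsp (n (k - 1))" and y: "y \<in> Rsp (n (k - 1))"
    and signs: "\<And>i j. k \<le> i \<Longrightarrow> i \<le> M \<Longrightarrow> j < n i \<Longrightarrow>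
      sgnz (lin_node k (sign_vector k M x) i j y) = sign_vector k M x i j"
  shows "sign_vector k M y = sign_vector k M x"
proof -
  have "signcond (sign_vector k M x i j) (lin_node k (sign_vector k M x) i j y)"
    if "k \<le> i" "i \<le> M" "j < n i" for i j
    using signs[OF that] signcond_sgnz by metis
  then have yc: "y \<in> sign_cell k M (sign_vector k M x)"
    unfolding sign_cell_lin_node using y by blast
  show ?thesis
  proof (intro ext)
    fix i j
    show "sign_vector k M y i j = sign_vector k M x i j"
    proof (cases "k \<le> i \<and> i \<le> M \<and> j < n i")
      case True
      then show ?thesis
        using signs[of i j] node_from_eq_lin_node[OF yc, of i j] unfolding sign_vector_def[of k M y] by simp
    next
      case False
      then show ?thesis unfolding sign_vector_def by auto
    qed
  qed
qed

lemma sign_vector_eventually_const: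
  assumes x: "x \<in> Rsp (n (k - 1))" and d: "d \<in> Rsp (n (k - 1))"
    and dir: "cell_direction k M x d"
  shows "\<forall>\<^sub>F s in at_right 0. sign_vector k M (\<lambda>l. x l + s * d l) = sign_vector k M x"
proof -
  define \<sigma> where "\<sigma> = sign_vector k M x"
  have per_node: "\<forall>\<^sub>F s in at_right 0. sgnz (lin_node k \<sigma> i j (\<lambda>l. x l + s * d l)) = \<sigma> i j"
    if ij: "k \<le> i" "i \<le> M" "j < n i" for i j
  proof -
    have sx: "sgnz (lin_node k \<sigma> i j x) = \<sigma> i j"
      using node_from_eq_lin_node[OF sign_cell_sign_vector[OF x] ij(1,2)] ij
      unfolding \<sigma>_def sign_vector_def by simp
    have lin: "lin_node k \<sigma> i j (\<lambda>l. x l + s * d l)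
        = lin_node k \<sigma> i j x + s * (lin_node k \<sigma> i j d - lin_node k \<sigma> i j (\<lambda>_. 0))" for s
      by (rule affine_fun_add_scaled[OF affine_fun_lin_node[OF ij(1)]])
    show ?thesis
    proof (cases "\<sigma> i j = 0")
      case True
      then have "lin_node k \<sigma> i j x = 0" using sx unfolding sgnz_def by (auto split: if_splits)
      moreover have "lin_node k \<sigma> i j d = lin_node k \<sigma> i j (\<lambda>_. 0)"
        using dir ij True unfolding cell_direction_def \<sigma>_def by simp
      ultimately have "lin_node k \<sigma> i j (\<lambda>l. x l + s * d l) = 0" for s using lin[of s] by simp
      then show ?thesis using True by (simp add: sgnz_def)
    next
      case False
      then have "lin_node k \<sigma> i j x \<noteq> 0" using sx unfolding sgnz_def by auto
      from eventually_sgnz_add_small[OF this] show ?thesis by (simp add: lin sx)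
    qed
  qed
  have "\<forall>\<^sub>F s in at_right 0. \<forall>i j. k \<le> i \<and> i \<le> M \<and> j < n i \<longrightarrow>
      sgnz (lin_node k \<sigma> i j (\<lambda>l. x l + s * d l)) = \<sigma> i j"
    by (intro eventually_all_nodes per_node)
  then show ?thesis
  proof eventually_elim
    case (elim s)
    have "(\<lambda>l. x l + s * d l) \<in> Rsp (n (k - 1))" using x d unfolding Rsp_def by simp
    from sign_vector_eqI[OF x this] show ?case using elim unfolding \<sigma>_def by blast
  qed
qed

lemma sign_vector_eventually_towards:
  assumes a: "a \<in> Rsp (n (k - 1))" and c: "c \<in> Rsp (n (k - 1))" and d: "d \<in> Rsp (n (k - 1))"
    and ca: "sign_vector k M c = sprod (sign_vector k M a) \<tau>"
    and dir: "cell_direction k M a d"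
  shows "\<forall>\<^sub>F s in at_right 0. sign_vector k M (\<lambda>l. a l + s * (c l - a l + d l)) = sign_vector k M c"
proof -
  have "(\<lambda>l. 2 * d l) \<in> Rsp (n (k - 1))" using d unfolding Rsp_def by simp
  from sign_vector_eventually_const[OF a this cell_direction_scale[OF dir]]
  have "\<forall>\<^sub>F s in at_right 0. sign_vector k M (\<lambda>l. a l + s * (2 * d l)) = sign_vector k M a" .
  moreover have "\<forall>\<^sub>F s in at_right (0::real). s < 1 / 2"
    by (rule eventually_at_rightI[where b = "1 / 2"]) auto
  ultimately show ?thesis using eventually_at_right_less
  proof eventually_elim
    case (elim s)
    define Y where "Y = (\<lambda>l. a l + s * (2 * d l))"
    define X where "X = (\<lambda>l. (1 - 2 * s) * a l + (2 * s) * c l)"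
    have sub: "sign_cell k M (sign_vector k M a) \<subseteq> sign_cell k M (sign_vector k M c)"
      unfolding ca by (rule sign_cell_subset_sprod)
    have "Y \<in> Rsp (n (k - 1))" using a d unfolding Y_def Rsp_def by simp
    then have "Y \<in> sign_cell k M (sign_vector k M c)"
      using sign_cell_sign_vector[of Y k M] elim sub unfolding Y_def by auto
    moreover have X: "sign_vector k M X = sign_vector k M c"
      unfolding X_def using sign_vector_convex_comb[OF _ c, where x = a and t = "2 * s"] sub sign_cell_sign_vector[OF a] elim
      by auto
    moreover have "X \<in> Rsp (n (k - 1))" using a c unfolding X_def Rsp_def by simp
    ultimately have "sign_vector k M (\<lambda>l. (1 - 1 / 2) * Y l + 1 / 2 * X l) = sign_vector k M c"
      using sign_vector_convex_comb[of Y k M X "1 / 2"] by simp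
    moreover have "(\<lambda>l. a l + s * (c l - a l + d l)) = (\<lambda>l. (1 - 1 / 2) * Y l + 1 / 2 * X l)"
      unfolding X_def Y_def by (simp add: algebra_simps)
    ultimately show ?case by simp
  qed
qed

lemma sign_vector_layer_eventually_sprod:
  assumes dir: "cell_direction k k p e"
  shows "\<forall>\<^sub>F s in at_right 0. sign_vector k k (\<lambda>l. p l + s * (e l + (q l - p l)))
           = sprod (sign_vector k k p) (sign_vector k k q)"
proof -
  have "\<forall>\<^sub>F s in at_right 0. sgnz (affmap n W b k (\<lambda>l. p l + s * (e l + (q l - p l))) j)
      = (if sgnz (affmap n W b k p j) \<noteq> 0 then sgnz (affmap n W b k p j) else sgnz (affmap n W b k q j))"
    if j: "j < n k" for j
  proof -
    define g where "g y = affmap n W b k y j" for y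
    have g: "affine_fun (n (k - 1)) g" unfolding g_def by (rule affine_fun_affmap)
    have gs: "g (\<lambda>l. p l + s * (e l + (q l - p l))) = g p + s * ((g e - g (\<lambda>_. 0)) + (g q - g p))" for s
      using affine_fun_add_scaled[OF g, of p s] affine_fun_add[OF g, of e "\<lambda>l. q l - p l"]
        affine_fun_diff[OF g, of q p] by simp
    have "\<forall>\<^sub>F s in at_right 0. sgnz (g (\<lambda>l. p l + s * (e l + (q l - p l))))
        = (if sgnz (g p) \<noteq> 0 then sgnz (g p) else sgnz (g q))"
    proof (cases "g p = 0")
      case True
      then have "g e = g (\<lambda>_. 0)" using dir j unfolding cell_direction_single g_def by simp
      then have gq: "g (\<lambda>l. p l + s * (e l + (q l - p l))) = s * g q" for s using gs True by simp
      show ?thesis using eventually_at_right_less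
      proof eventually_elim
        case (elim s)
        show ?case using gq[of s] True elim by (simp add: sgnz_def zero_less_mult_iff mult_less_0_iff)
      qed
    next
      case False
      then have "sgnz (g p) \<noteq> 0" unfolding sgnz_def by auto
      with eventually_sgnz_add_small[OF False] show ?thesis unfolding gs by simp
    qed
    then show ?thesis unfolding g_def .
  qed
  then have "\<forall>\<^sub>F s in at_right 0. \<forall>j\<in>{..<n k}. sgnz (affmap n W b k (\<lambda>l. p l + s * (e l + (q l - p l))) j)
      = (if sgnz (affmap n W b k p j) \<noteq> 0 then sgnz (affmap n W b k p j) else sgnz (affmap n W b k q j))"
    by (intro eventually_ball_finite) auto
  then show ?thesis by eventually_elim (auto simp: sign_vector_single sprod_def fun_eq_iff)
qed

lemma realise_sprod_single_layer:
  assumes p: "p \<in> Rsp (n (k - 1))" and q: "q \<in> Rsp (n (k - 1))"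
  shows "\<exists>r\<in>Rsp (n (k - 1)). sign_vector k k r = sprod (sign_vector k k p) (sign_vector k k q)"
proof -
  obtain s where "sign_vector k k (\<lambda>l. p l + s * (0 + (q l - p l))) = sprod (sign_vector k k p) (sign_vector k k q)"
    using sign_vector_layer_eventually_sprod[of k p "\<lambda>_. 0" q]
    by (auto simp: cell_direction_def elim: eventually_at_right_0_obtain)
  moreover have "(\<lambda>l. p l + s * (0 + (q l - p l))) \<in> Rsp (n (k - 1))" using p q unfolding Rsp_def by simp
  ultimately show ?thesis by blast
qed

section \<open>Realising products of sign vectors\<close>

lemma layer_eq_lin_layers: "x \<in> sign_cell k k \<sigma> \<Longrightarrow> layer n W b k x = lin_layers k \<sigma> 1 x"
  using layers_from_eq_lin_layers[of k 1 x \<sigma>] sign_cell_signcond[of x k k \<sigma>]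
  by (simp add: node_from_self)

lemma layer_dirderiv:
  assumes du: "dirderiv (layer n W b k) p v u"
    and dir: "cell_direction k k p v"
  shows "u j = lin_layers k (sprod (sign_vector k k p) \<tau>) 1 (\<lambda>l. p l + v l) j
             - lin_layers k (sprod (sign_vector k k p) \<tau>) 1 p j"
proof -
  have lim: "((\<lambda>t. (layer n W b k (\<lambda>l. p l + t * v l) j - layer n W b k p j) / t) \<longlongrightarrow> u j) (at 0)"
    using du unfolding dirderiv_def by blast
  show ?thesis
  proof (cases "j < n k")
    case False
    then have "((\<lambda>t::real. 0) \<longlongrightarrow> u j) (at 0)" using lim by (simp add: layer_eq_0)
    then have "u j = 0" using LIM_const_eq by metis
    then show ?thesis using False by simp
  next
    case True
    define g where "g y = affmap n W b k y j" for y
    define \<beta> where "\<beta> = g v - g (\<lambda>_. 0)"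
    have g: "affine_fun (n (k - 1)) g" unfolding g_def by (rule affine_fun_affmap)
    have "layer n W b k (\<lambda>l. p l + t * v l) j = relu (g p + t * \<beta>)" for t
      unfolding layer_def g_def[symmetric] \<beta>_def by (rule arg_cong[OF affine_fun_add_scaled[OF g]])
    moreover have "layer n W b k p j = relu (g p)" unfolding layer_def g_def ..
    ultimately have "((\<lambda>t. (relu (g p + t * \<beta>) - relu (g p)) / t) \<longlongrightarrow> u j) (at 0)" using lim by simp
    moreover have \<beta>0: "g p = 0 \<Longrightarrow> \<beta> = 0" using dir True unfolding cell_direction_single g_def \<beta>_def by simp
    ultimately have "u j = (if g p > 0 then \<beta> else 0)"
      using relu_difference_quotient tendsto_unique[OF at_neq_bot] by blast
    moreover have "g (\<lambda>l. p l + v l) - g p = \<beta>" using affine_fun_add[OF g, of p v] unfolding \<beta>_def by simp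
    ultimately show ?thesis
      using True \<beta>0 unfolding g_def by (auto simp: sprod_def sign_vector_single sgnz_def)
  qed
qed

lemma supertransversal_decomp:
  assumes st: "supertransversal m n W b" and k: "1 \<le> k" "k \<le> m"
    and p: "p \<in> Rsp (n (k - 1))" and w: "w \<in> Rsp (n k)"
  obtains v z where "v \<in> Rsp (n (k - 1))" "cell_direction k k p v"
    "z \<in> Rsp (n k)" "cell_direction (Suc k) (Suc m) (layer n W b k p) z"
    "\<And>j. w j = lin_layers k (sprod (sign_vector k k p) \<tau>) 1 (\<lambda>l. p l + v l) j
               - lin_layers k (sprod (sign_vector k k p) \<tau>) 1 p j + z j"
proof -
  define C where "C = sign_cell k k (sign_vector k k p)"
  define K where "K = sign_cell (Suc k) (Suc m) (sign_vector (Suc k) (Suc m) (layer n W b k p))"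
  have "C \<in> Rcells n W b k" using sign_vector_cell_in_cplx[OF p, of 0] unfolding C_def by simp
  moreover have "K \<in> cplx n W b (Suc k) (m - k)"
    using sign_vector_cell_in_cplx[of "layer n W b k p" "Suc k" "m - k"] layer_in_Rsp k(2)
    unfolding K_def by simp
  ultimately have "transverse_on_cell (layer n W b k) C (n k) (relint K)"
    using st k unfolding supertransversal_def by simp
  moreover have "p \<in> relint C" "layer n W b k p \<in> relint K"
    unfolding C_def K_def using in_relint_sign_cell p layer_in_Rsp by auto
  ultimately obtain v u z where v: "v \<in> tspace (relint C)" and u: "dirderiv (layer n W b k) p v u"
    and z: "z \<in> tspace (relint K)" and wuz: "w = (\<lambda>j. u j + z j)"
    using w unfolding transverse_on_cell_def by blast
  show thesis
  proof (rule that)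
    show "v \<in> Rsp (n (k - 1))" using v tspace_relint_subset_Rsp[OF sign_cell_subset_Rsp] unfolding C_def by blast
    show dir: "cell_direction k k p v" using v cell_direction_tspace unfolding C_def by blast
    show "z \<in> Rsp (n k)"
      using z tspace_relint_subset_Rsp[OF sign_cell_subset_Rsp[of "Suc k" "Suc m"]] unfolding K_def by auto
    show "cell_direction (Suc k) (Suc m) (layer n W b k p) z" using z cell_direction_tspace unfolding K_def by blast
    fix j
    show "w j = lin_layers k (sprod (sign_vector k k p) \<tau>) 1 (\<lambda>l. p l + v l) j
               - lin_layers k (sprod (sign_vector k k p) \<tau>) 1 p j + z j"
      using layer_dirderiv[OF u dir] wuz by simp
  qed
qed

lemma layer_perturbation:
  assumes p: "p \<in> sign_cell k k \<sigma>"
    and r: "(\<lambda>l. p l + s * ((v1 l - v2 l) + (q l - p l))) \<in> sign_cell k k \<sigma>"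
    and w1: "\<And>j. c j - layer n W b k p j
      = lin_layers k \<sigma> 1 (\<lambda>l. p l + v1 l) j - lin_layers k \<sigma> 1 p j + z1 j"
    and w2: "\<And>j. lin_layers k \<sigma> 1 q j - layer n W b k p j
      = lin_layers k \<sigma> 1 (\<lambda>l. p l + v2 l) j - lin_layers k \<sigma> 1 p j + z2 j"
  shows "layer n W b k (\<lambda>l. p l + s * ((v1 l - v2 l) + (q l - p l)))
       = (\<lambda>j. layer n W b k p j + s * (c j - layer n W b k p j + (z2 j - z1 j)))"
proof
  fix j
  define g where "g y = lin_layers k \<sigma> 1 y j" for y
  have g: "affine_fun (n (k - 1)) g" unfolding g_def using affine_fun_lin_layers[of k \<sigma> 0] by simp
  have gp: "g p = layer n W b k p j" unfolding g_def using layer_eq_lin_layers[OF p] by simp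
  have "g (\<lambda>l. p l + s * ((v1 l - v2 l) + (q l - p l)))
      = g p + s * ((g v1 - g (\<lambda>_. 0)) - (g v2 - g (\<lambda>_. 0)) + (g q - g p))"
    using affine_fun_add_scaled[OF g] affine_fun_add[OF g] affine_fun_diff[OF g] by simp
  moreover have "g (\<lambda>l. p l + v1 l) - g p = g v1 - g (\<lambda>_. 0)"
    "g (\<lambda>l. p l + v2 l) - g p = g v2 - g (\<lambda>_. 0)"
    using affine_fun_add[OF g] by simp_all
  then have "(g v1 - g (\<lambda>_. 0)) - (g v2 - g (\<lambda>_. 0)) + (g q - g p)
      = c j - layer n W b k p j + (z2 j - z1 j)"
    using w1[of j] w2[of j] gp unfolding g_def by simp
  ultimately show "layer n W b k (\<lambda>l. p l + s * ((v1 l - v2 l) + (q l - p l))) j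
      = layer n W b k p j + s * (c j - layer n W b k p j + (z2 j - z1 j))"
    using layer_eq_lin_layers[OF r] gp unfolding g_def by simp
qed

lemma realise_sprod_step:
  assumes st: "supertransversal m n W b" and k: "1 \<le> k" "k \<le> m"
    and IH: "\<And>a a'. a \<in> Rsp (n k) \<Longrightarrow> a' \<in> Rsp (n k) \<Longrightarrow> \<exists>c\<in>Rsp (n k).
      sign_vector (Suc k) (Suc m) c = sprod (sign_vector (Suc k) (Suc m) a) (sign_vector (Suc k) (Suc m) a')"
    and p: "p \<in> Rsp (n (k - 1))" and q: "q \<in> Rsp (n (k - 1))"
  shows "\<exists>r\<in>Rsp (n (k - 1)). sign_vector k (Suc m) r = sprod (sign_vector k (Suc m) p) (sign_vector k (Suc m) q)"
proof -
  define a where "a = layer n W b k p"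
  define \<sigma> where "\<sigma> = sprod (sign_vector k k p) (sign_vector k k q)"
  obtain c where cR: "c \<in> Rsp (n k)" and ca: "sign_vector (Suc k) (Suc m) c
      = sprod (sign_vector (Suc k) (Suc m) a) (sign_vector (Suc k) (Suc m) (layer n W b k q))"
    using IH[OF layer_in_Rsp layer_in_Rsp] unfolding a_def by blast
  have w1R: "(\<lambda>j. c j - a j) \<in> Rsp (n k)" using cR layer_in_Rsp unfolding a_def Rsp_def by simp
  have w2R: "(\<lambda>j. lin_layers k \<sigma> 1 q j - a j) \<in> Rsp (n k)"
    using layer_in_Rsp unfolding a_def Rsp_def by simp
  obtain v1 z1 where v1: "v1 \<in> Rsp (n (k - 1))" "cell_direction k k p v1"
    and z1: "z1 \<in> Rsp (n k)" "cell_direction (Suc k) (Suc m) a z1"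
    and w1: "\<And>j. c j - a j = lin_layers k \<sigma> 1 (\<lambda>l. p l + v1 l) j - lin_layers k \<sigma> 1 p j + z1 j"
    by (rule supertransversal_decomp[OF st k p w1R]) (unfold a_def \<sigma>_def, blast)
  obtain v2 z2 where v2: "v2 \<in> Rsp (n (k - 1))" "cell_direction k k p v2"
    and z2: "z2 \<in> Rsp (n k)" "cell_direction (Suc k) (Suc m) a z2"
    and w2: "\<And>j. lin_layers k \<sigma> 1 q j - a j = lin_layers k \<sigma> 1 (\<lambda>l. p l + v2 l) j - lin_layers k \<sigma> 1 p j + z2 j"
    by (rule supertransversal_decomp[OF st k p w2R]) (unfold a_def \<sigma>_def, blast)
  have "\<forall>\<^sub>F s in at_right 0.
      sign_vector k k (\<lambda>l. p l + s * ((v1 l - v2 l) + (q l - p l))) = \<sigma> \<and>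
      sign_vector (Suc k) (Suc m) (\<lambda>l. a l + s * (c l - a l + (z2 l - z1 l))) = sign_vector (Suc k) (Suc m) c"
  proof (rule eventually_conj)
    show "\<forall>\<^sub>F s in at_right 0. sign_vector k k (\<lambda>l. p l + s * ((v1 l - v2 l) + (q l - p l))) = \<sigma>"
      unfolding \<sigma>_def using sign_vector_layer_eventually_sprod[OF cell_direction_diff[OF v1(2) v2(2)]] .
    have "(\<lambda>l. z2 l - z1 l) \<in> Rsp (n k)" using z1(1) z2(1) unfolding Rsp_def by simp
    then show "\<forall>\<^sub>F s in at_right 0. sign_vector (Suc k) (Suc m) (\<lambda>l. a l + s * (c l - a l + (z2 l - z1 l)))
        = sign_vector (Suc k) (Suc m) c"
      using sign_vector_eventually_towards[OF _ _ _ ca cell_direction_diff[OF z2(2) z1(2)]]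
        layer_in_Rsp cR unfolding a_def by simp
  qed
  then obtain s where layer_signs: "sign_vector k k (\<lambda>l. p l + s * ((v1 l - v2 l) + (q l - p l))) = \<sigma>"
    and upper_signs: "sign_vector (Suc k) (Suc m) (\<lambda>l. a l + s * (c l - a l + (z2 l - z1 l)))
      = sign_vector (Suc k) (Suc m) c"
    by (rule eventually_at_right_0_obtain) blast
  define r where "r = (\<lambda>l. p l + s * ((v1 l - v2 l) + (q l - p l)))"
  have rR: "r \<in> Rsp (n (k - 1))" using p q v1(1) v2(1) unfolding r_def Rsp_def by simp
  have "p \<in> sign_cell k k \<sigma>"
    using sign_cell_subset_sprod sign_cell_sign_vector[OF p] unfolding \<sigma>_def by blast
  moreover have "r \<in> sign_cell k k \<sigma>"
    using sign_cell_sign_vector[OF rR, where M = k] layer_signs unfolding r_def by simp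
  ultimately have "layer n W b k r = (\<lambda>l. a l + s * (c l - a l + (z2 l - z1 l)))"
    unfolding r_def a_def by (rule layer_perturbation) (use w1 w2 in \<open>simp_all add: a_def\<close>)
  then show ?thesis
    using sign_vector_sprodI[of k "Suc m" r p q] rR k layer_signs upper_signs ca
    unfolding r_def \<sigma>_def a_def by auto
qed

lemma realise_sprod:
  assumes st: "supertransversal m n W b" and k: "1 \<le> k" "k \<le> Suc m"
    and p: "p \<in> Rsp (n (k - 1))" and q: "q \<in> Rsp (n (k - 1))"
  shows "\<exists>r\<in>Rsp (n (k - 1)). sign_vector k (Suc m) r = sprod (sign_vector k (Suc m) p) (sign_vector k (Suc m) q)"
  using k(2,1) p q
proof (induction k arbitrary: p q rule: inc_induct)
  case base
  show ?case by (rule realise_sprod_single_layer[OF base.prems(2,3)])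
next
  case (step k)
  show ?case
  proof (rule realise_sprod_step[OF st step.prems(1)])
    show "k \<le> m" using step.hyps(2) by simp
    fix a a' assume "a \<in> Rsp (n k)" "a' \<in> Rsp (n k)"
    then show "\<exists>c\<in>Rsp (n k). sign_vector (Suc k) (Suc m) c
        = sprod (sign_vector (Suc k) (Suc m) a) (sign_vector (Suc k) (Suc m) a')"
      using step.IH by simp
  qed (use step.prems in simp_all)
qed

end

theorem lemma18:
  fixes m :: nat and n :: "nat \<Rightarrow> nat"
    and W :: "nat \<Rightarrow> nat \<Rightarrow> nat \<Rightarrow> real" and b :: "nat \<Rightarrow> nat \<Rightarrow> real"
    and C D :: "(nat \<Rightarrow> real) set"
  assumes "n (Suc m) = 1"
    and "\<forall>i\<le>Suc m. 1 \<le> n i"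
    and "supertransversal m n W b"
    and "C \<in> cplx n W b 1 m" and "D \<in> cplx n W b 1 m"
  shows "\<exists>E\<in>cplx n W b 1 m.
           sprod (signseq m n W b C) (signseq m n W b D) = signseq m n W b E \<and> face_le C E"
proof -
  obtain x where x: "x \<in> Rsp (n 0)" "C = sign_cell n W b 1 (Suc m) (sign_vector n W b 1 (Suc m) x)"
    using cplx_eq_sign_vector_cell[OF assms(4)] by auto
  obtain y where y: "y \<in> Rsp (n 0)" "D = sign_cell n W b 1 (Suc m) (sign_vector n W b 1 (Suc m) y)"
    using cplx_eq_sign_vector_cell[OF assms(5)] by auto
  obtain r where r: "r \<in> Rsp (n 0)"
    "sign_vector n W b 1 (Suc m) r = sprod (sign_vector n W b 1 (Suc m) x) (sign_vector n W b 1 (Suc m) y)"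
    using realise_sprod[OF assms(3), where k = 1 and p = x and q = y] x(1) y(1) by auto
  define E where "E = sign_cell n W b 1 (Suc m) (sign_vector n W b 1 (Suc m) r)"
  have "E \<in> cplx n W b 1 m"
    using sign_vector_cell_in_cplx[where x = r and k = 1 and d = m] r(1) unfolding E_def by simp
  moreover have "sprod (signseq m n W b C) (signseq m n W b D) = signseq m n W b E"
  proof -
    note signseq = signseq_sign_vector_cell[where n = n and W = W and b = b and m = m]
    have "signseq m n W b C = sign_vector n W b 1 (Suc m) x" using signseq[OF x(1)] x(2) by simp
    moreover have "signseq m n W b D = sign_vector n W b 1 (Suc m) y" using signseq[OF y(1)] y(2) by simp
    moreover have "signseq m n W b E = sign_vector n W b 1 (Suc m) r" using signseq[OF r(1)] E_def by simp
    ultimately show ?thesis using r(2) by simp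
  qed
  moreover have "face_le C E" unfolding face_le_def E_def r(2) x(2) using sign_cell_face by blast
  ultimately show ?thesis by blast
qed

end
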